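(* Let $(X,d_X)$ be a proper, doubling metric space, $p\in X$, and let $\eta:[0,\infty)\to[0,\infty)$ be a homeomorphism. Assume there is a sequence of points $p_n\in X$ with $p_n\to p$ such that $X$ is $\eta$-self-quasisymmetric at $p_n$ for every $n$. Then there exists a weak tangent $T_pX\in WT_p(X)$ such that $X$ is $\eta'$-quasisymmetrically embedded into $T_pX$, where $\eta'(t)=1/\eta^{-1}(1/t)$.
   Context: A homeomorphism $f:X\to Y$ between metric spaces is $\eta$-quasisymmetric if $d_Y(f(x),f(y))/d_Y(f(x),f(z))\le \eta(d_X(x,y)/d_X(x,z))$ for all $x,y,z\in X$ with $x\ne z$; an $\eta$-quasisymmetric embedding is an $\eta$-quasisymmetric homeomorphism onto its image. $X$ is $\eta$-self-quasisymmetric at a point $x$ if there is $r_x>0$ such that for every $0<r<r_x$ there exists a subset $U\subset B(x,r)$ and an $\eta$-quasisymmetric homeomorphism from $U$ onto $X$. Proper: closed balls are compact. Doubling: there is $C\ge1$ such that every subset of diameter $d$ is covered by at most $C$ subsets of diameter at most $d/2$. Pointed Gromov–Hausdorff convergence $(X_n,p_n,d_n)\to(Z,z,d)$ ($Z$ complete): for every $r,\varepsilon>0$ there is $n_0$ such that for all $n>n_0$ there is a map $g:B(p_n,r)\to Z$ with $g(p_n)=z$, $\sup_{x,y}|d_n(x,y)-d(g(x),g(y))|<\varepsilon$, and $B(z,r-\varepsilon)$ contained in the $\varepsilon$-neighborhood of $g(B(p_n,r))$. A weak tangent of $X$ at $p$ is a pointed Gromov–Hausdorff limit $(T_pX,p_\infty,g_p)$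 of $(X,q_n,d_X/\lambda_n)$ with $\lambda_n>0$, $\lambda_n\to0$ and $q_n\to p$; $WT_p(X)$ is the set of these. *)

theory Defs
  imports "HOL-Analysis.Analysis"
begin

text \<open>Metric spaces are given as a carrier set together with a distance function,
  satisfying the locale Metric_space (HOL-Analysis, Abstract_Metric_Spaces).\<close>

definition mdiam :: "('a \<Rightarrow> 'a \<Rightarrow> real) \<Rightarrow> 'a set \<Rightarrow> ereal" where
  "mdiam d A = (SUP xy \<in> A \<times> A. ereal (d (fst xy) (snd xy)))"

definition proper_mspace :: "'a set \<Rightarrow> ('a \<Rightarrow> 'a \<Rightarrow> real) \<Rightarrow> bool" where
  "proper_mspace X d \<longleftrightarrow>
     (\<forall>x r. compactin (Metric_space.mtopology X d) (Metric_space.mcball X d x r))"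

definition doubling_mspace :: "'a set \<Rightarrow> ('a \<Rightarrow> 'a \<Rightarrow> real) \<Rightarrow> bool" where
  "doubling_mspace X d \<longleftrightarrow>
     (\<exists>C::real. C \<ge> 1 \<and> (\<forall>A. A \<subseteq> X \<longrightarrow>
        (\<exists>F. finite F \<and> real (card F) \<le> C \<and> A \<subseteq> \<Union>F \<and>
             (\<forall>B\<in>F. B \<subseteq> X \<and> mdiam d B \<le> mdiam d A / 2))))"

definition qs_homeo ::
  "'a set \<Rightarrow> ('a \<Rightarrow> 'a \<Rightarrow> real) \<Rightarrow> 'b set \<Rightarrow> ('b \<Rightarrow> 'b \<Rightarrow> real)
     \<Rightarrow> (real \<Rightarrow> real) \<Rightarrow> ('a \<Rightarrow> 'b) \<Rightarrow> bool" where
  "qs_homeo X dX Y dY \<eta> f \<longleftrightarrow>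
     homeomorphic_map (Metric_space.mtopology X dX) (Metric_space.mtopology Y dY) f \<and>
     (\<forall>x\<in>X. \<forall>y\<in>X. \<forall>z\<in>X. x \<noteq> z \<longrightarrow>
        dY (f x) (f y) / dY (f x) (f z) \<le> \<eta> (dX x y / dX x z))"

definition qs_embedding ::
  "'a set \<Rightarrow> ('a \<Rightarrow> 'a \<Rightarrow> real) \<Rightarrow> 'b set \<Rightarrow> ('b \<Rightarrow> 'b \<Rightarrow> real)
     \<Rightarrow> (real \<Rightarrow> real) \<Rightarrow> ('a \<Rightarrow> 'b) \<Rightarrow> bool" where
  "qs_embedding X dX Y dY \<eta> f \<longleftrightarrow> f ` X \<subseteq> Y \<and> qs_homeo X dX (f ` X) dY \<eta> f"

definition self_qs_at :: "'a set \<Rightarrow> ('a \<Rightarrow> 'a \<Rightarrow> real) \<Rightarrow> (real \<Rightarrow> real) \<Rightarrow> 'a \<Rightarrow> bool" where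
  "self_qs_at X d \<eta> x \<longleftrightarrow>
     (\<exists>rx>0. \<forall>r. 0 < r \<and> r < rx \<longrightarrow>
        (\<exists>U f. U \<subseteq> Metric_space.mball X d x r \<and> qs_homeo U d X d \<eta> f \<and> f ` U = X))"

definition pGH_converges ::
  "(nat \<Rightarrow> 'a set) \<Rightarrow> (nat \<Rightarrow> 'a) \<Rightarrow> (nat \<Rightarrow> 'a \<Rightarrow> 'a \<Rightarrow> real)
     \<Rightarrow> 'b set \<Rightarrow> 'b \<Rightarrow> ('b \<Rightarrow> 'b \<Rightarrow> real) \<Rightarrow> bool" where
  "pGH_converges Xs ps ds Z z dZ \<longleftrightarrow>
     Metric_space Z dZ \<and> Metric_space.mcomplete Z dZ \<and> z \<in> Z \<and>
     (\<forall>r>0. \<forall>\<epsilon>>0. \<exists>n0. \<forall>n>n0.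
        (\<exists>g. (\<forall>x \<in> Metric_space.mball (Xs n) (ds n) (ps n) r. g x \<in> Z) \<and>
             g (ps n) = z \<and>
             (\<exists>\<delta><\<epsilon>. \<forall>x \<in> Metric_space.mball (Xs n) (ds n) (ps n) r.
                        \<forall>y \<in> Metric_space.mball (Xs n) (ds n) (ps n) r.
                          \<bar>ds n x y - dZ (g x) (g y)\<bar> \<le> \<delta>) \<and>
             Metric_space.mball Z dZ z (r - \<epsilon>) \<subseteq>
               {w \<in> Z. \<exists>x \<in> Metric_space.mball (Xs n) (ds n) (ps n) r. dZ w (g x) < \<epsilon>}))"

definition weak_tangents ::
  "'a set \<Rightarrow> ('a \<Rightarrow> 'a \<Rightarrow> real) \<Rightarrow> 'a \<Rightarrow> ('b set \<times> 'b \<times> ('b \<Rightarrow> 'b \<Rightarrow> real)) set" where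
  "weak_tangents X d p =
     {(T, t, dT). \<exists>lam q. (\<forall>n. lam n > 0) \<and> lam \<longlonglongrightarrow> 0 \<and>
        (\<forall>n. q n \<in> X) \<and> (\<lambda>n. d (q n) p) \<longlonglongrightarrow> 0 \<and>
        pGH_converges (\<lambda>n. X) q (\<lambda>n x y. d x y / lam n) T t dT}"

end

theory Submission
  imports Defs
begin

(*
  Inverting the self-quasisymmetric maps at the points p_n gives eta'-quasisymmetric embeddings
  h_n of X into balls B(p_n, 1/(n+1)), which shrink to p. Fix x0 \<noteq> x1 and rescale X by
  lambda_n = d(h_n x0, h_n x1) around q_n = h_n x0. Along a nonprincipal ultrafilter the rescaled
  spaces have an ultralimit Z; the doubling condition makes its balls totally bounded, so Z is
  complete and separable, and a reindexing of the rescaled spaces converges to Z in the pointed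
  Gromov-Hausdorff sense: Z is a weak tangent at p. As the h_n are uniformly eta'-quasisymmetric and
  h_n x0, h_n x1 are at rescaled distance 1, the map x \<mapsto> [h_n x] into Z is injective and
  inherits the eta'-ratio bound, and an injective map with such a bound is a quasisymmetric
  embedding.
*)

section \<open>Ultrafilters\<close>

definition ultrafilter :: "'a filter \<Rightarrow> bool" where
  "ultrafilter F \<longleftrightarrow> F \<noteq> bot \<and> (\<forall>P. eventually P F \<or> eventually (\<lambda>x. \<not> P x) F)"

lemma ultrafilter_le_exists:
  fixes F :: "'a filter"
  assumes "F \<noteq> bot"
  shows "\<exists>U. ultrafilter U \<and> U \<le> F"
proof -
  define A where "A = {G. G \<noteq> bot \<and> G \<le> F}"
  have "partial_order_on A (relation_of (\<lambda>G H. H \<le> G) A)"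
    by (auto simp: partial_order_on_def preorder_on_def refl_on_def trans_on_def antisym_on_def
        relation_of_def)
  moreover have "\<exists>H\<in>A. \<forall>G\<in>C. H \<le> G" if C: "C \<in> Chains (relation_of (\<lambda>G H. H \<le> G) A)" for C
  proof (cases "C = {}")
    case True
    then show ?thesis using assms by (auto simp: A_def)
  next
    case False
    have CA: "C \<subseteq> A" and comparable: "\<And>G H. G \<in> C \<Longrightarrow> H \<in> C \<Longrightarrow> G \<le> H \<or> H \<le> G"
      using C by (auto simp: Chains_def relation_of_def)
    have "\<exists>K\<in>C. K \<le> inf G H" if "G \<in> C" "H \<in> C" for G H
      using comparable[OF that] that by (metis inf.absorb_iff1 inf.absorb_iff2 order_refl)
    then have "eventually P (Inf C) \<longleftrightarrow> (\<exists>G\<in>C. eventually P G)" for P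
      by (intro eventually_Inf_base False) blast
    then have "Inf C \<noteq> bot"
      using CA by (auto simp: A_def trivial_limit_def)
    moreover have "Inf C \<le> F"
      using False CA by (auto simp: A_def intro: Inf_lower2)
    ultimately show ?thesis
      by (auto simp: A_def intro: Inf_lower)
  qed
  ultimately obtain U where U: "U \<in> A" and minimal: "\<And>G. G \<in> A \<Longrightarrow> G \<le> U \<Longrightarrow> G = U"
    using predicate_Zorn[of A "\<lambda>G H. H \<le> G"] by blast
  have "eventually P U \<or> eventually (\<lambda>x. \<not> P x) U" for P
  proof (rule disjCI)
    assume "\<not> eventually (\<lambda>x. \<not> P x) U"
    then have "inf U (principal {x. P x}) \<in> A"
      using U by (auto simp: A_def trivial_limit_def eventually_inf_principal intro: le_infI1)
    then have "inf U (principal {x. P x}) = U"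
      by (rule minimal) simp
    moreover have "eventually P (inf U (principal {x. P x}))"
      by (simp add: eventually_inf_principal)
    ultimately show "eventually P U"
      by simp
  qed
  then show ?thesis
    using U by (auto simp: ultrafilter_def A_def)
qed

lemma ultrafilter_tendsto_in_compact:
  assumes U: "ultrafilter U" and K: "compact K" and fK: "eventually (\<lambda>x. f x \<in> K) U"
  shows "\<exists>L\<in>K. (f \<longlongrightarrow> L) U"
proof -
  have "filtermap f U \<noteq> bot"
    using U by (simp add: ultrafilter_def filtermap_bot_iff)
  moreover have "eventually (\<lambda>y. y \<in> K) (filtermap f U)"
    using fK by (simp add: eventually_filtermap)
  ultimately obtain L where "L \<in> K" and L: "inf (nhds L) (filtermap f U) \<noteq> bot"
    using K unfolding compact_filter by blast
  have "eventually (\<lambda>x. f x \<in> S) U" if "open S" "L \<in> S" for S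
  proof (rule ccontr)
    assume "\<not> eventually (\<lambda>x. f x \<in> S) U"
    then have "eventually (\<lambda>x. x \<notin> S) (filtermap f U)"
      using U by (auto simp: ultrafilter_def eventually_filtermap)
    moreover have "eventually (\<lambda>x. x \<in> S) (nhds L)"
      using that by (simp add: eventually_nhds_in_open)
    ultimately have "eventually (\<lambda>x. False) (inf (nhds L) (filtermap f U))"
      using eventually_inf by fastforce
    then show False
      using L by (simp add: trivial_limit_def)
  qed
  then show ?thesis
    using \<open>L \<in> K\<close> by (auto simp: tendsto_def)
qed

lemma homeomorphic_map_onto_image_metric:
  assumes X: "Metric_space X d" and Y: "Metric_space (f ` X) e" and inj: "inj_on f X"
    and cont: "\<And>x \<epsilon>. x \<in> X \<Longrightarrow> \<epsilon> > 0 \<Longrightarrow> \<exists>\<delta>>0. \<forall>y\<in>X. d x y < \<delta> \<longrightarrow> e (f x) (f y) < \<epsilon>"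
    and cont_inv: "\<And>x \<epsilon>. x \<in> X \<Longrightarrow> \<epsilon> > 0 \<Longrightarrow> \<exists>\<delta>>0. \<forall>y\<in>X. e (f x) (f y) < \<delta> \<longrightarrow> d x y < \<epsilon>"
  shows "homeomorphic_map (Metric_space.mtopology X d) (Metric_space.mtopology (f ` X) e) f"
proof -
  interpret MX: Metric_space X d by (rule X)
  interpret MY: Metric_space "f ` X" e by (rule Y)
  have "continuous_map MX.mtopology MY.mtopology f"
    unfolding MX.metric_continuous_map[OF Y] using cont by blast
  moreover have "continuous_map MY.mtopology MX.mtopology (inv_into X f)"
    unfolding MY.metric_continuous_map[OF X] using cont_inv inj
    by (fastforce simp: inv_into_into)
  ultimately show ?thesis
    unfolding homeomorphic_map_maps homeomorphic_maps_def using inj by auto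
qed

lemma Metric_space_scaled:
  assumes "Metric_space X d" "c > 0"
  shows "Metric_space X (\<lambda>x y. d x y / c)"
proof -
  interpret Metric_space X d by fact
  show ?thesis
    using \<open>c > 0\<close> by unfold_locales (auto simp: commute add_divide_distrib[symmetric] divide_right_mono triangle)
qed

lemma separable_metric_inj_real:
  assumes M: "Metric_space Z D" and "countable N" and "N \<subseteq> Z"
    and dense: "\<And>a \<epsilon>. a \<in> Z \<Longrightarrow> \<epsilon> > 0 \<Longrightarrow> \<exists>b\<in>N. D a b < \<epsilon>"
  shows "\<exists>\<iota>::'a \<Rightarrow> real. inj_on \<iota> Z"
proof -
  interpret Metric_space Z D by (rule M)
  obtain \<kappa> :: "nat set \<Rightarrow> real" where "inj \<kappa>"
    using nat_sets_eqpoll_reals unfolding eqpoll_def bij_betw_def by blast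
  have "countable (N \<times> (UNIV :: nat set))"
    using \<open>countable N\<close> by simp
  then obtain h :: "'a \<times> nat \<Rightarrow> nat" where h: "inj_on h (N \<times> UNIV)"
    unfolding countable_def by blast
  \<comment> \<open>A point is determined by the balls of radius \<open>1/(j+1)\<close> around points of \<open>N\<close> that contain it.\<close>
  define balls where "balls a = {bj \<in> N \<times> UNIV. D a (fst bj) < inverse (Suc (snd bj))}" for a
  have "balls a \<noteq> balls a'" if a: "a \<in> Z" "a' \<in> Z" "a \<noteq> a'" for a a'
  proof
    assume same: "balls a = balls a'"
    have "0 < D a a' / 2"
      using a nonneg[of a a'] zero[of a a'] by linarith
    then obtain j where j: "inverse (Suc j) < D a a' / 2"
      using reals_Archimedean by blast
    obtain b where b: "b \<in> N" "D a b < inverse (Suc j)"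
      using dense[OF a(1), of "inverse (Suc j)"] by auto
    then have "(b, j) \<in> balls a"
      by (simp add: balls_def)
    then have "(b, j) \<in> balls a'"
      using same by simp
    then have "D a' b < inverse (Suc j)"
      by (simp add: balls_def)
    moreover have "b \<in> Z"
      using b(1) \<open>N \<subseteq> Z\<close> by blast
    ultimately show False
      using b j triangle[OF a(1) _ a(2), of b] commute[of b a'] by linarith
  qed
  moreover have "inj_on (image h) (Pow (N \<times> UNIV))"
    using h by (rule inj_on_image_Pow)
  moreover have "balls a \<in> Pow (N \<times> UNIV)" for a
    by (auto simp: balls_def)
  ultimately have "inj_on (\<kappa> \<circ> image h \<circ> balls) Z"
    using \<open>inj \<kappa>\<close> by (intro inj_onI) (auto simp: inj_eq inj_on_eq_iff)
  then show ?thesis by blast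
qed

lemma finite_net_of_separated_card_le:
  assumes M: "Metric_space Z D" and "A \<subseteq> Z" and "\<epsilon> > 0"
    and bound: "\<And>P. P \<subseteq> A \<Longrightarrow> finite P \<Longrightarrow> (\<forall>a\<in>P. \<forall>b\<in>P. a \<noteq> b \<longrightarrow> \<epsilon> \<le> D a b) \<Longrightarrow> card P \<le> m"
  shows "\<exists>N. finite N \<and> N \<subseteq> A \<and> (\<forall>a\<in>A. \<exists>b\<in>N. D a b < \<epsilon>)"
proof -
  interpret Metric_space Z D by (rule M)
  define separated where
    "separated P \<longleftrightarrow> P \<subseteq> A \<and> finite P \<and> (\<forall>a\<in>P. \<forall>b\<in>P. a \<noteq> b \<longrightarrow> \<epsilon> \<le> D a b)" for P
  have "\<exists>n. (\<exists>P. separated P \<and> card P = n) \<and> (\<forall>n'. (\<exists>P. separated P \<and> card P = n') \<longrightarrow> n' \<le> n)"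
    by (rule ex_has_greatest_nat[where k = 0 and b = "Suc m"]) (auto simp: separated_def bound le_imp_less_Suc)
  then obtain P where P: "separated P"
    and largest: "\<And>P'. separated P' \<Longrightarrow> card P' \<le> card P"
    by blast
  have "\<exists>b\<in>P. D a b < \<epsilon>" if a: "a \<in> A" for a
  proof (rule ccontr)
    assume far: "\<not> (\<exists>b\<in>P. D a b < \<epsilon>)"
    have "a \<notin> P"
      using far a \<open>A \<subseteq> Z\<close> \<open>\<epsilon> > 0\<close> by force
    moreover have "separated (insert a P)"
      using P far a commute by (auto simp: separated_def not_less)
    ultimately have "card (insert a P) \<le> card P"
      using largest by blast
    then show False
      using \<open>a \<notin> P\<close> P by (simp add: separated_def)
  qed
  then show ?thesis
    using P by (auto simp: separated_def)
qed

lemma (in Metric_space) MCauchy_fast_subsequence: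
  assumes "MCauchy \<sigma>"
  shows "\<exists>r. strict_mono r \<and> (\<forall>j k. j \<le> k \<longrightarrow> d (\<sigma> (r j)) (\<sigma> (r k)) < inverse (Suc j))"
proof -
  have "\<forall>j. \<exists>N. \<forall>n n'. N \<le> n \<longrightarrow> N \<le> n' \<longrightarrow> d (\<sigma> n) (\<sigma> n') < inverse (Suc j)"
    using assms unfolding MCauchy_def by (meson inverse_positive_iff_positive of_nat_0_less_iff zero_less_Suc)
  then obtain N where N: "\<And>j n n'. N j \<le> n \<Longrightarrow> N j \<le> n' \<Longrightarrow> d (\<sigma> n) (\<sigma> n') < inverse (Suc j)"
    by metis
  define r where "r k = k + Max (N ` {..k})" for k
  have "r k < r (Suc k)" for k
  proof -
    have "Max (N ` {..k}) \<le> Max (N ` {..Suc k})"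
      by (intro Max_mono) auto
    then show ?thesis
      unfolding r_def by linarith
  qed
  then have "strict_mono r"
    by (rule strict_monoI_Suc)
  moreover have "N j \<le> r k" if "j \<le> k" for j k
    using that by (auto simp: r_def intro: trans_le_add2 Max_ge)
  ultimately show ?thesis
    using N by blast
qed

lemma (in Metric_space) mcomplete_of_fast_Cauchy:
  assumes fast: "\<And>c. range c \<subseteq> M \<Longrightarrow> (\<forall>j k. j \<le> k \<longrightarrow> d (c j) (c k) < inverse (Suc j)) \<Longrightarrow>
      \<exists>l\<in>M. \<forall>j. d (c j) l \<le> inverse (Suc j)"
  shows "mcomplete"
  unfolding mcomplete_def
proof (intro allI impI)
  fix \<sigma> assume \<sigma>: "MCauchy \<sigma>"
  then obtain r where r: "strict_mono r" and r_fast: "\<forall>j k. j \<le> k \<longrightarrow> d (\<sigma> (r j)) (\<sigma> (r k)) < inverse (Suc j)"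
    using MCauchy_fast_subsequence by blast
  have "range (\<sigma> \<circ> r) \<subseteq> M"
    using \<sigma> by (auto simp: MCauchy_def)
  then obtain l where l: "l \<in> M" and dist_l: "\<And>j. d (\<sigma> (r j)) l \<le> inverse (Suc j)"
    using fast[of "\<sigma> \<circ> r"] r_fast by auto
  have "limitin mtopology (\<sigma> \<circ> r) l sequentially"
    unfolding limit_metric_sequentially
  proof (intro conjI l allI impI)
    fix \<epsilon> :: real assume "\<epsilon> > 0"
    then obtain j where j: "inverse (Suc j) < \<epsilon>"
      using reals_Archimedean by blast
    have "d (\<sigma> (r n)) l < \<epsilon>" if "j \<le> n" for n
    proof -
      have "inverse (real (Suc n)) \<le> inverse (Suc j)"
        using that by (simp add: le_imp_inverse_le)
      then show ?thesis
        using dist_l[of n] j by linarith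
    qed
    then show "\<exists>N. \<forall>n\<ge>N. (\<sigma> \<circ> r) n \<in> M \<and> d ((\<sigma> \<circ> r) n) l < \<epsilon>"
      using \<open>range (\<sigma> \<circ> r) \<subseteq> M\<close> by auto blast
  qed
  then show "\<exists>x. limitin mtopology \<sigma> x sequentially"
    using MCauchy_convergent_subsequence[OF \<sigma> r] by blast
qed

section \<open>Pointed Gromov--Hausdorff approximations\<close>

definition pointed_GH_approx ::
  "'a set \<Rightarrow> ('a \<Rightarrow> 'a \<Rightarrow> real) \<Rightarrow> 'a \<Rightarrow> 'b set \<Rightarrow> ('b \<Rightarrow> 'b \<Rightarrow> real) \<Rightarrow> 'b \<Rightarrow> real \<Rightarrow> real \<Rightarrow> bool"
  where
  "pointed_GH_approx Y dY y Z dZ z r \<epsilon> \<longleftrightarrow>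
     (\<exists>g. (\<forall>x \<in> Metric_space.mball Y dY y r. g x \<in> Z) \<and> g y = z \<and>
          (\<exists>\<delta><\<epsilon>. \<forall>x \<in> Metric_space.mball Y dY y r. \<forall>x' \<in> Metric_space.mball Y dY y r.
                    \<bar>dY x x' - dZ (g x) (g x')\<bar> \<le> \<delta>) \<and>
          Metric_space.mball Z dZ z (r - \<epsilon>) \<subseteq>
            {w \<in> Z. \<exists>x \<in> Metric_space.mball Y dY y r. dZ w (g x) < \<epsilon>})"

lemma pGH_converges_iff_pointed_GH_approx:
  "pGH_converges Xs ps ds Z z dZ \<longleftrightarrow>
     Metric_space Z dZ \<and> Metric_space.mcomplete Z dZ \<and> z \<in> Z \<and>
     (\<forall>r>0. \<forall>\<epsilon>>0. \<exists>n0. \<forall>n>n0. pointed_GH_approx (Xs n) (ds n) (ps n) Z dZ z r \<epsilon>)"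
  unfolding pGH_converges_def pointed_GH_approx_def by simp

lemma pointed_GH_approx_mono:
  assumes Y: "Metric_space Y dY" and Z: "Metric_space Z dZ" and "y \<in> Y" "z \<in> Z"
    and approx: "pointed_GH_approx Y dY y Z dZ z r' \<epsilon>'"
    and "0 < r" "r \<le> r'" "0 < \<epsilon>'" "2 * \<epsilon>' \<le> \<epsilon>"
  shows "pointed_GH_approx Y dY y Z dZ z r \<epsilon>"
proof -
  interpret Y: Metric_space Y dY by (rule Y)
  interpret Z: Metric_space Z dZ by (rule Z)
  obtain g \<delta> where gZ: "\<forall>x \<in> Y.mball y r'. g x \<in> Z" and gy: "g y = z" and "\<delta> < \<epsilon>'"
    and distortion: "\<forall>x \<in> Y.mball y r'. \<forall>x' \<in> Y.mball y r'. \<bar>dY x x' - dZ (g x) (g x')\<bar> \<le> \<delta>"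
    and cover: "Z.mball z (r' - \<epsilon>') \<subseteq> {w \<in> Z. \<exists>x \<in> Y.mball y r'. dZ w (g x) < \<epsilon>'}"
    using approx unfolding pointed_GH_approx_def by blast
  have sub: "Y.mball y r \<subseteq> Y.mball y r'"
    using \<open>r \<le> r'\<close> by (rule Y.mball_subset_concentric)
  have "y \<in> Y.mball y r'"
    using \<open>y \<in> Y\<close> \<open>0 < r\<close> \<open>r \<le> r'\<close> by simp
  have "\<exists>x \<in> Y.mball y r. dZ w (g x) < \<epsilon>" if w: "w \<in> Z.mball z (r - \<epsilon>)" for w
  proof -
    have "w \<in> Z.mball z (r' - \<epsilon>')"
      using w \<open>r \<le> r'\<close> \<open>0 < \<epsilon>'\<close> \<open>2 * \<epsilon>' \<le> \<epsilon>\<close> by auto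
    then obtain x where x: "x \<in> Y.mball y r'" and wx: "dZ w (g x) < \<epsilon>'"
      using cover by blast
    have "\<bar>dY y x - dZ (g y) (g x)\<bar> \<le> \<delta>"
      using distortion \<open>y \<in> Y.mball y r'\<close> x by blast
    then have "dY y x \<le> dZ z (g x) + \<delta>"
      by (simp add: gy abs_le_iff)
    also have "\<dots> \<le> dZ z w + dZ w (g x) + \<delta>"
      using Z.triangle w gZ x by auto
    finally have "x \<in> Y.mball y r"
      using w x wx \<open>\<delta> < \<epsilon>'\<close> \<open>2 * \<epsilon>' \<le> \<epsilon>\<close> by auto
    then show ?thesis
      using wx \<open>0 < \<epsilon>'\<close> \<open>2 * \<epsilon>' \<le> \<epsilon>\<close> by force
  qed
  then show ?thesis
    unfolding pointed_GH_approx_def using gZ gy distortion sub \<open>\<delta> < \<epsilon>'\<close> \<open>2 * \<epsilon>' \<le> \<epsilon>\<close> \<open>0 < \<epsilon>'\<close>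
    by (intro exI[of _ g] conjI exI[of _ \<delta>]) (auto 0 3)
qed

lemma pointed_GH_approx_of_net:
  assumes Y: "Metric_space Y dY" and Z: "Metric_space Z dZ"
    and "y \<in> Y" "N \<subseteq> Z" "z \<in> N" "e > 0"
    and \<phi>Y: "\<And>b. b \<in> N \<Longrightarrow> \<phi> b \<in> Y"
    and base: "dY y (\<phi> z) < e"
    and distortion: "\<And>a b. a \<in> N \<Longrightarrow> b \<in> N \<Longrightarrow> \<bar>dY (\<phi> a) (\<phi> b) - dZ a b\<bar> < e"
    and coverY: "\<And>x. x \<in> Y \<Longrightarrow> dY y x < r \<Longrightarrow> \<exists>b\<in>N. dY x (\<phi> b) < e"
    and coverZ: "\<And>w. w \<in> Z \<Longrightarrow> dZ z w < r \<Longrightarrow> \<exists>b\<in>N. dZ w b < e"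
  shows "pointed_GH_approx Y dY y Z dZ z r (4 * e)"
proof -
  interpret Y: Metric_space Y dY by (rule Y)
  interpret Z: Metric_space Z dZ by (rule Z)
  define g where "g x = (if x = y then z else SOME b. b \<in> N \<and> dY x (\<phi> b) < e)" for x
  have g: "g x \<in> N \<and> dY x (\<phi> (g x)) < e" if "x \<in> Y.mball y r" for x
  proof (cases "x = y")
    case True
    then show ?thesis
      using base \<open>z \<in> N\<close> by (simp add: g_def)
  next
    case False
    then show ?thesis
      using coverY[of x] that someI_ex[of "\<lambda>b. b \<in> N \<and> dY x (\<phi> b) < e"] by (auto simp: g_def)
  qed
  have "\<bar>dY x x' - dZ (g x) (g x')\<bar> \<le> 3 * e" if x: "x \<in> Y.mball y r" and x': "x' \<in> Y.mball y r" for x x'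
  proof -
    have in_Y: "x \<in> Y" "x' \<in> Y" "\<phi> (g x) \<in> Y" "\<phi> (g x') \<in> Y"
      using x x' g \<phi>Y by auto
    show ?thesis
      using distortion[of "g x" "g x'"] g[OF x] g[OF x']
        Y.triangle[OF in_Y(1,3,2)] Y.triangle[OF in_Y(3,4,2)]
        Y.triangle[OF in_Y(3,1,4)] Y.triangle[OF in_Y(1,2,4)]
        Y.commute[of x "\<phi> (g x)"] Y.commute[of x' "\<phi> (g x')"]
      by (auto simp: abs_le_iff abs_less_iff)
  qed
  moreover have "\<exists>x \<in> Y.mball y r. dZ w (g x) < 4 * e" if w: "w \<in> Z.mball z (r - 4 * e)" for w
  proof -
    obtain b where b: "b \<in> N" "dZ w b < e"
      using coverZ[of w] w \<open>e > 0\<close> by auto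
    have "dY y (\<phi> b) \<le> dY y (\<phi> z) + dY (\<phi> z) (\<phi> b)"
      using \<phi>Y \<open>y \<in> Y\<close> \<open>z \<in> N\<close> b by (intro Y.triangle) auto
    also have "\<dots> < e + (dZ z b + e)"
      using base distortion[OF \<open>z \<in> N\<close> b(1)] by (auto simp: abs_less_iff)
    also have "\<dots> \<le> e + (dZ z w + dZ w b + e)"
      using Z.triangle[of z w b] w b \<open>N \<subseteq> Z\<close> by auto
    finally have x: "\<phi> b \<in> Y.mball y r"
      using w b \<phi>Y \<open>y \<in> Y\<close> \<open>e > 0\<close> by auto
    have "dZ b (g (\<phi> b)) < 2 * e"
      using g[OF x] distortion[OF b(1), of "g (\<phi> b)"] by (auto simp: abs_less_iff)
    moreover have "dZ w (g (\<phi> b)) \<le> dZ w b + dZ b (g (\<phi> b))"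
      using Z.triangle w b g[OF x] \<open>N \<subseteq> Z\<close> by auto
    ultimately have "dZ w (g (\<phi> b)) < 4 * e"
      using b \<open>e > 0\<close> by linarith
    then show ?thesis
      using x by blast
  qed
  moreover have "g y = z"
    by (simp add: g_def)
  ultimately show ?thesis
    unfolding pointed_GH_approx_def using g \<open>N \<subseteq> Z\<close> \<open>e > 0\<close>
    by (intro exI[of _ g] conjI exI[of _ "3 * e"]) (auto simp del: Y.in_mball)
qed

definition transport_metric :: "('a \<Rightarrow> 'b) \<Rightarrow> 'a set \<Rightarrow> ('a \<Rightarrow> 'a \<Rightarrow> real) \<Rightarrow> 'b \<Rightarrow> 'b \<Rightarrow> real"
  where "transport_metric \<iota> Z D a b = D (inv_into Z \<iota> a) (inv_into Z \<iota> b)"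

lemma transport_metric_image [simp]:
  "inj_on \<iota> Z \<Longrightarrow> a \<in> Z \<Longrightarrow> b \<in> Z \<Longrightarrow> transport_metric \<iota> Z D (\<iota> a) (\<iota> b) = D a b"
  by (simp add: transport_metric_def)

lemma Metric_space_transport_metric:
  assumes "Metric_space Z D" "inj_on \<iota> Z"
  shows "Metric_space (\<iota> ` Z) (transport_metric \<iota> Z D)"
proof -
  interpret Metric_space Z D by fact
  show ?thesis
    using assms(2) by unfold_locales (auto simp: transport_metric_def commute triangle)
qed

lemma mcomplete_transport_metric:
  assumes M: "Metric_space Z D" and \<iota>: "inj_on \<iota> Z" and "Metric_space.mcomplete Z D"
  shows "Metric_space.mcomplete (\<iota> ` Z) (transport_metric \<iota> Z D)"
proof -
  interpret Z: Metric_space Z D by (rule M)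
  interpret T: Metric_space "\<iota> ` Z" "transport_metric \<iota> Z D"
    by (rule Metric_space_transport_metric[OF M \<iota>])
  show ?thesis
    unfolding T.mcomplete_def
  proof (intro allI impI)
    fix \<sigma> assume \<sigma>: "T.MCauchy \<sigma>"
    define \<tau> where "\<tau> n = inv_into Z \<iota> (\<sigma> n)" for n
    have \<sigma>_in: "\<sigma> n \<in> \<iota> ` Z" for n
      using \<sigma> by (auto simp: T.MCauchy_def)
    then have \<tau>Z: "\<tau> n \<in> Z" and \<sigma>_eq: "\<sigma> n = \<iota> (\<tau> n)" for n
      by (auto simp: \<tau>_def inv_into_into f_inv_into_f)
    have "Z.MCauchy \<tau>"
      using \<sigma> \<iota> \<tau>Z unfolding Z.MCauchy_def T.MCauchy_def by (auto simp: \<sigma>_eq)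
    then obtain l where "limitin Z.mtopology \<tau> l sequentially"
      using \<open>Z.mcomplete\<close> Z.mcomplete_def by blast
    then have "limitin T.mtopology \<sigma> (\<iota> l) sequentially"
      using \<iota> \<tau>Z unfolding Z.limitin_metric T.limitin_metric by (auto simp: \<sigma>_eq)
    then show "\<exists>x. limitin T.mtopology \<sigma> x sequentially"
      by blast
  qed
qed

lemma pointed_GH_approx_transport:
  assumes M: "Metric_space Z D" and \<iota>: "inj_on \<iota> Z" and "z \<in> Z" and approx: "pointed_GH_approx Y dY y Z D z r \<epsilon>"
  shows "pointed_GH_approx Y dY y (\<iota> ` Z) (transport_metric \<iota> Z D) (\<iota> z) r \<epsilon>"
proof -
  obtain g \<delta> where gZ: "\<forall>x \<in> Metric_space.mball Y dY y r. g x \<in> Z" and gy: "g y = z" and "\<delta> < \<epsilon>"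
    and distortion: "\<forall>x \<in> Metric_space.mball Y dY y r. \<forall>x' \<in> Metric_space.mball Y dY y r.
        \<bar>dY x x' - D (g x) (g x')\<bar> \<le> \<delta>"
    and cover: "Metric_space.mball Z D z (r - \<epsilon>) \<subseteq>
        {w \<in> Z. \<exists>x \<in> Metric_space.mball Y dY y r. D w (g x) < \<epsilon>}"
    using approx unfolding pointed_GH_approx_def by blast
  have "\<exists>x \<in> Metric_space.mball Y dY y r. transport_metric \<iota> Z D w (\<iota> (g x)) < \<epsilon>"
    if w: "w \<in> Metric_space.mball (\<iota> ` Z) (transport_metric \<iota> Z D) (\<iota> z) (r - \<epsilon>)" for w
  proof -
    obtain a where a: "a \<in> Z" "w = \<iota> a" "D z a < r - \<epsilon>"
      using w \<iota> \<open>z \<in> Z\<close> Metric_space.in_mball[OF Metric_space_transport_metric[OF M \<iota>]] by auto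
    then have "a \<in> Metric_space.mball Z D z (r - \<epsilon>)"
      using \<open>z \<in> Z\<close> by (simp add: Metric_space.in_mball[OF M])
    then obtain x where x: "x \<in> Metric_space.mball Y dY y r" "D a (g x) < \<epsilon>"
      using cover by blast
    then have "transport_metric \<iota> Z D w (\<iota> (g x)) = D a (g x)"
      using a gZ \<iota> by simp
    then show ?thesis
      using x by (intro bexI[of _ x]) simp_all
  qed
  then show ?thesis
    unfolding pointed_GH_approx_def using gZ gy distortion \<iota> \<open>\<delta> < \<epsilon>\<close>
      Metric_space.in_mball[OF Metric_space_transport_metric[OF M \<iota>]]
    by (intro exI[of _ "\<iota> \<circ> g"] conjI exI[of _ \<delta>]) auto
qed

lemma pGH_converges_transport:
  assumes "pGH_converges Xs ps ds Z z D" and "inj_on \<iota> Z"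
  shows "pGH_converges Xs ps ds (\<iota> ` Z) (\<iota> z) (transport_metric \<iota> Z D)"
  using assms Metric_space_transport_metric mcomplete_transport_metric pointed_GH_approx_transport
  unfolding pGH_converges_iff_pointed_GH_approx by (metis image_eqI)

lemma diagonal_reindexing:
  fixes U :: "nat filter" and P :: "nat \<Rightarrow> real \<Rightarrow> real \<Rightarrow> bool"
  assumes "U \<noteq> bot" "U \<le> sequentially"
    and ev: "\<And>r \<epsilon>. r > 0 \<Longrightarrow> \<epsilon> > 0 \<Longrightarrow> eventually (\<lambda>m. P m r \<epsilon>) U"
    and mono: "\<And>m r r' \<epsilon> \<epsilon>'. P m r' \<epsilon>' \<Longrightarrow> 0 < r \<Longrightarrow> r \<le> r' \<Longrightarrow> 0 < \<epsilon>' \<Longrightarrow> 2 * \<epsilon>' \<le> \<epsilon> \<Longrightarrow> P m r \<epsilon>"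
  shows "\<exists>\<sigma>. filterlim \<sigma> sequentially sequentially \<and> (\<forall>r>0. \<forall>\<epsilon>>0. \<exists>n0. \<forall>n>n0. P (\<sigma> n) r \<epsilon>)"
proof -
  have "\<exists>m. k \<le> m \<and> (\<forall>j\<le>k. P m (Suc j) (inverse (Suc j)))" for k
  proof -
    have "eventually (\<lambda>m. k \<le> m) U"
      using \<open>U \<le> sequentially\<close> unfolding le_filter_def eventually_sequentially by blast
    moreover have "eventually (\<lambda>m. \<forall>j\<in>{..k}. P m (Suc j) (inverse (Suc j))) U"
      by (intro eventually_ball_finite ballI ev) auto
    ultimately show ?thesis
      using eventually_happens'[OF \<open>U \<noteq> bot\<close> eventually_conj] by fastforce
  qed
  then obtain \<sigma> where \<sigma>_ge: "\<And>k. k \<le> \<sigma> k" and \<sigma>_P: "\<And>j k. j \<le> k \<Longrightarrow> P (\<sigma> k) (Suc j) (inverse (Suc j))"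
    by metis
  have "filterlim \<sigma> sequentially sequentially"
    using filterlim_at_top_mono[OF filterlim_ident, of \<sigma>] \<sigma>_ge by (simp add: always_eventually)
  moreover have "\<exists>n0. \<forall>n>n0. P (\<sigma> n) r \<epsilon>" if "r > 0" "\<epsilon> > 0" for r \<epsilon>
  proof -
    obtain j1 :: nat where "r \<le> j1"
      using real_arch_simple by blast
    obtain j2 where j2: "inverse (Suc j2) < \<epsilon> / 2"
      using reals_Archimedean \<open>\<epsilon> > 0\<close> by (metis half_gt_zero)
    define j where "j = max j1 j2"
    have "r \<le> Suc j"
      using \<open>r \<le> j1\<close> by (simp add: j_def)
    moreover have "inverse (real (Suc j)) \<le> inverse (Suc j2)"
      by (simp add: j_def le_imp_inverse_le)
    then have "2 * inverse (Suc j) \<le> \<epsilon>"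
      using j2 by linarith
    ultimately have "P (\<sigma> n) r \<epsilon>" if "j < n" for n
      using mono[OF \<sigma>_P[of j n]] \<open>r > 0\<close> that by simp
    then show ?thesis
      by blast
  qed
  ultimately show ?thesis
    by blast
qed

section \<open>Doubling spaces\<close>

lemma mdiam_le_ereal_iff: "mdiam d A \<le> ereal r \<longleftrightarrow> (\<forall>x\<in>A. \<forall>y\<in>A. d x y \<le> r)"
  unfolding mdiam_def by (auto simp: SUP_le_iff)

lemma refine_cover_halving:
  fixes C \<rho> :: real
  assumes halve: "\<And>A. A \<subseteq> X \<Longrightarrow> \<exists>G. finite G \<and> card G \<le> C \<and> A \<subseteq> \<Union>G \<and>
      (\<forall>B\<in>G. B \<subseteq> X \<and> mdiam d B \<le> mdiam d A / 2)"
    and "finite F" and small: "\<forall>B\<in>F. B \<subseteq> X \<and> (\<forall>x\<in>B. \<forall>y\<in>B. d x y \<le> \<rho>)"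
  shows "\<exists>F'. finite F' \<and> card F' \<le> card F * C \<and> \<Union>F \<subseteq> \<Union>F' \<and>
      (\<forall>B'\<in>F'. B' \<subseteq> X \<and> (\<forall>x\<in>B'. \<forall>y\<in>B'. d x y \<le> \<rho> / 2))"
proof -
  have "\<forall>B\<in>F. \<exists>G. finite G \<and> card G \<le> C \<and> B \<subseteq> \<Union>G \<and>
      (\<forall>B'\<in>G. B' \<subseteq> X \<and> mdiam d B' \<le> mdiam d B / 2)"
  proof
    fix B assume "B \<in> F"
    then have "B \<subseteq> X"
      using small by blast
    then show "\<exists>G. finite G \<and> card G \<le> C \<and> B \<subseteq> \<Union>G \<and>
        (\<forall>B'\<in>G. B' \<subseteq> X \<and> mdiam d B' \<le> mdiam d B / 2)"
      by (rule halve)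
  qed
  then obtain G where "\<forall>B\<in>F. finite (G B) \<and> card (G B) \<le> C \<and> B \<subseteq> \<Union>(G B) \<and>
      (\<forall>B'\<in>G B. B' \<subseteq> X \<and> mdiam d B' \<le> mdiam d B / 2)"
    by (rule bchoice[THEN exE])
  then have G_finite: "\<And>B. B \<in> F \<Longrightarrow> finite (G B)"
    and G_card: "\<And>B. B \<in> F \<Longrightarrow> card (G B) \<le> C"
    and G_cover: "\<And>B. B \<in> F \<Longrightarrow> B \<subseteq> \<Union>(G B)"
    and G_halves: "\<And>B B'. B \<in> F \<Longrightarrow> B' \<in> G B \<Longrightarrow> B' \<subseteq> X \<and> mdiam d B' \<le> mdiam d B / 2"
    by auto
  define F' where "F' = (\<Union>B\<in>F. G B)"
  have "card F' \<le> (\<Sum>B\<in>F. card (G B))"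
    unfolding F'_def using \<open>finite F\<close> by (rule card_UN_le)
  then have "real (card F') \<le> (\<Sum>B\<in>F. real (card (G B)))"
    by (metis of_nat_le_iff of_nat_sum)
  also have "\<dots> \<le> card F * C"
    using G_card by (rule sum_bounded_above)
  finally have "real (card F') \<le> card F * C" .
  moreover have "B' \<subseteq> X \<and> (\<forall>x\<in>B'. \<forall>y\<in>B'. d x y \<le> \<rho> / 2)" if B': "B' \<in> F'" for B'
  proof -
    obtain B where B: "B \<in> F" "B' \<in> G B"
      using B' by (auto simp: F'_def)
    have "mdiam d B' \<le> mdiam d B / 2"
      using G_halves[OF B] by blast
    also have "\<dots> \<le> ereal \<rho> / 2"
      using small B(1) by (intro ereal_divide_right_mono) (auto simp: mdiam_le_ereal_iff)
    also have "\<dots> = ereal (\<rho> / 2)"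
      by simp
    finally show ?thesis
      using G_halves[OF B] by (simp only: mdiam_le_ereal_iff)
  qed
  moreover have "\<Union>F \<subseteq> \<Union>F'"
  proof
    fix x assume "x \<in> \<Union>F"
    then obtain B where "B \<in> F" "x \<in> B"
      by blast
    then show "x \<in> \<Union>F'"
      using G_cover unfolding F'_def by blast
  qed
  moreover have "finite F'"
    unfolding F'_def using \<open>finite F\<close> G_finite by (rule finite_UN_I)
  ultimately show ?thesis
    by blast
qed

lemma doubling_mspace_cover_pow:
  assumes "doubling_mspace X d"
  obtains C :: real where "\<And>k A r. A \<subseteq> X \<Longrightarrow> \<forall>x\<in>A. \<forall>y\<in>A. d x y \<le> r \<Longrightarrow>
           \<exists>F. finite F \<and> card F \<le> C ^ k \<and> A \<subseteq> \<Union>F \<and>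
               (\<forall>B\<in>F. B \<subseteq> X \<and> (\<forall>x\<in>B. \<forall>y\<in>B. d x y \<le> r / 2 ^ k))"
proof -
  obtain C :: real where "C \<ge> 1" and halve: "\<And>A. A \<subseteq> X \<Longrightarrow> \<exists>F. finite F \<and> card F \<le> C \<and>
      A \<subseteq> \<Union>F \<and> (\<forall>B\<in>F. B \<subseteq> X \<and> mdiam d B \<le> mdiam d A / 2)"
    using assms unfolding doubling_mspace_def by blast
  have "\<exists>F. finite F \<and> card F \<le> C ^ k \<and> A \<subseteq> \<Union>F \<and> (\<forall>B\<in>F. B \<subseteq> X \<and> (\<forall>x\<in>B. \<forall>y\<in>B. d x y \<le> r / 2 ^ k))"
    if A: "A \<subseteq> X" "\<forall>x\<in>A. \<forall>y\<in>A. d x y \<le> r" for k A r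
  proof (induction k)
    case 0
    show ?case
      using A by (intro exI[of _ "{A}"]) simp
  next
    case (Suc k)
    then obtain F where F: "finite F" "card F \<le> C ^ k" "A \<subseteq> \<Union>F"
      and small: "\<forall>B\<in>F. B \<subseteq> X \<and> (\<forall>x\<in>B. \<forall>y\<in>B. d x y \<le> r / 2 ^ k)"
      by (elim exE conjE)
    have halve_pow: "r / 2 ^ Suc k = r / 2 ^ k / 2"
      by (simp add: mult.commute)
    have "\<exists>F'. finite F' \<and> card F' \<le> card F * C \<and> \<Union>F \<subseteq> \<Union>F' \<and>
        (\<forall>B'\<in>F'. B' \<subseteq> X \<and> (\<forall>x\<in>B'. \<forall>y\<in>B'. d x y \<le> r / 2 ^ Suc k))"
      unfolding halve_pow by (rule refine_cover_halving[OF _ F(1) small]) (rule halve)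
    then obtain F' where "finite F'" "card F' \<le> card F * C" "\<Union>F \<subseteq> \<Union>F'"
      and "\<forall>B'\<in>F'. B' \<subseteq> X \<and> (\<forall>x\<in>B'. \<forall>y\<in>B'. d x y \<le> r / 2 ^ Suc k)"
      by (elim exE conjE)
    moreover have "card F * C \<le> C ^ Suc k"
      using F(2) \<open>C \<ge> 1\<close> by (simp add: mult.commute mult_right_mono)
    ultimately show ?case
      using F(3) by (intro exI[of _ F']) (auto simp del: power_Suc)
  qed
  then show ?thesis
    by (rule that)
qed

lemma doubling_separated_card_bound:
  assumes "Metric_space X d" "doubling_mspace X d" "\<epsilon> > 0"
  obtains m :: nat where "\<And>P r. P \<subseteq> X \<Longrightarrow> finite P \<Longrightarrow> \<forall>x\<in>P. \<forall>y\<in>P. d x y \<le> r \<Longrightarrow>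
      \<forall>x\<in>P. \<forall>y\<in>P. x \<noteq> y \<longrightarrow> \<epsilon> * r < d x y \<Longrightarrow> card P \<le> m"
proof -
  interpret Metric_space X d by fact
  obtain C :: real where cover: "\<And>k A r. A \<subseteq> X \<Longrightarrow> \<forall>x\<in>A. \<forall>y\<in>A. d x y \<le> r \<Longrightarrow>
      \<exists>F. finite F \<and> card F \<le> C ^ k \<and> A \<subseteq> \<Union>F \<and> (\<forall>B\<in>F. B \<subseteq> X \<and> (\<forall>x\<in>B. \<forall>y\<in>B. d x y \<le> r / 2 ^ k))"
    by (rule doubling_mspace_cover_pow[OF \<open>doubling_mspace X d\<close>]) (rule that)
  obtain k :: nat where "1 / \<epsilon> < 2 ^ k"
    using real_arch_pow[of 2 "1 / \<epsilon>"] by auto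
  then have k: "1 / 2 ^ k < \<epsilon>"
    using \<open>\<epsilon> > 0\<close> by (simp add: field_simps)
  have "card P \<le> nat \<lceil>C ^ k\<rceil>"
    if P: "P \<subseteq> X" "finite P" "\<forall>x\<in>P. \<forall>y\<in>P. d x y \<le> r" and sep: "\<forall>x\<in>P. \<forall>y\<in>P. x \<noteq> y \<longrightarrow> \<epsilon> * r < d x y"
    for P r
  proof (cases "P = {}")
    case False
    then have "r \<ge> 0"
      using P by fastforce
    then have "r * (1 / 2 ^ k) \<le> r * \<epsilon>"
      using k by (intro mult_left_mono) auto
    then have "r / 2 ^ k \<le> \<epsilon> * r"
      by (simp add: mult.commute)
    obtain F where F: "finite F" "card F \<le> C ^ k" "P \<subseteq> \<Union>F"
      and small: "\<forall>B\<in>F. B \<subseteq> X \<and> (\<forall>x\<in>B. \<forall>y\<in>B. d x y \<le> r / 2 ^ k)"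
      using cover[OF P(1,3), of k] by (elim exE conjE)
    define f where "f x = (SOME B. B \<in> F \<and> x \<in> B)" for x
    have f: "f x \<in> F \<and> x \<in> f x" if "x \<in> P" for x
      using F(3) that someI_ex[of "\<lambda>B. B \<in> F \<and> x \<in> B"] by (auto simp: f_def)
    have "inj_on f P"
    proof (rule inj_onI, rule ccontr)
      fix x y assume xy: "x \<in> P" "y \<in> P" "f x = f y" "x \<noteq> y"
      then have "d x y \<le> r / 2 ^ k"
        using f[OF xy(1)] f[OF xy(2)] small by metis
      moreover have "\<epsilon> * r < d x y"
        using sep xy by blast
      ultimately show False
        using \<open>r / 2 ^ k \<le> \<epsilon> * r\<close> by linarith
    qed
    then have "card P \<le> card F"
      using f F(1) by (intro card_inj_on_le) auto
    then show ?thesis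
      using F(2) by linarith
  qed simp
  then show ?thesis
    by (rule that)
qed

section \<open>Distortion functions and quasisymmetric maps\<close>

lemma homeomorphism_nonneg_reals_strict_mono:
  fixes f :: "real \<Rightarrow> real"
  assumes "homeomorphism {0..} {0..} f g"
  shows "strict_mono_on {0..} f" and "f 0 = 0"
proof -
  have inj: "inj_on f {0..}" and cont: "continuous_on {0..} f" and onto: "f ` {0..} = {0..}"
    using assms by (auto simp: homeomorphism_def intro: inj_on_inverseI)
  have "f 0 \<ge> 0"
    using onto by auto
  then have "f 0 + 1 \<in> f ` {0..}"
    using onto by simp
  then obtain s where s: "f 0 + 1 = f s" "s \<in> {0..}"
    by (rule imageE)
  have "\<not> strict_antimono_on {0..} f"
  proof
    assume "strict_antimono_on {0..} f"
    then have "f s \<le> f 0"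
      using s(2) by (cases "s = 0") (auto simp: monotone_on_def less_imp_le)
    then show False
      using s(1) by simp
  qed
  then show mono: "strict_mono_on {0..} f"
    using injective_eq_monotone_map[OF _ cont] inj by (simp add: is_interval_ci)
  have "0 \<in> f ` {0..}"
    using onto by simp
  then obtain a where a: "0 = f a" "a \<in> {0..}"
    by (rule imageE)
  then show "f 0 = 0"
    using mono \<open>f 0 \<ge> 0\<close> by (cases "a = 0") (force simp: strict_mono_on_def)+
qed

definition inverse_distortion :: "(real \<Rightarrow> real) \<Rightarrow> real \<Rightarrow> real" where
  "inverse_distortion \<eta> s = 1 / inv_into {0..} \<eta> (1 / s)"

context
  fixes \<eta> g :: "real \<Rightarrow> real"
  assumes \<eta>: "homeomorphism {0..} {0..} \<eta> g"
begin

lemma inverse_homeo_strict_mono: "strict_mono_on {0..} g" and inverse_homeo_0: "g 0 = 0"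
  using homeomorphism_nonneg_reals_strict_mono[OF homeomorphism_symD[OF \<eta>]] by auto

lemma inverse_homeo_mono: "0 \<le> s \<Longrightarrow> s \<le> t \<Longrightarrow> g s \<le> g t"
  using strict_mono_onD[OF inverse_homeo_strict_mono, of s t] by (cases "s = t") auto

lemma inverse_homeo_pos: "0 < s \<Longrightarrow> 0 < g s"
  using strict_mono_onD[OF inverse_homeo_strict_mono, of 0 s] inverse_homeo_0 by auto

lemma inverse_distortion_eq: "0 \<le> s \<Longrightarrow> inverse_distortion \<eta> s = 1 / g (1 / s)"
proof -
  assume "0 \<le> s"
  have "inj_on \<eta> {0..}" and "\<eta> (g (1 / s)) = 1 / s" and "g (1 / s) \<in> {0..}"
    using \<eta> \<open>0 \<le> s\<close> by (auto simp: homeomorphism_def intro: inj_on_inverseI)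
  then show ?thesis
    by (simp add: inverse_distortion_def inv_into_f_eq)
qed

lemma inverse_distortion_nonneg: "0 \<le> s \<Longrightarrow> 0 \<le> inverse_distortion \<eta> s"
  using inverse_homeo_mono[of 0 "1 / s"] inverse_homeo_0 by (simp add: inverse_distortion_eq)

lemma inverse_distortion_pos: "0 < s \<Longrightarrow> 0 < inverse_distortion \<eta> s"
  by (simp add: inverse_distortion_eq inverse_homeo_pos)

lemma inverse_distortion_mono: "0 < s \<Longrightarrow> s \<le> t \<Longrightarrow> inverse_distortion \<eta> s \<le> inverse_distortion \<eta> t"
  by (simp add: inverse_distortion_eq inverse_homeo_pos inverse_homeo_mono frac_le)

lemma inverse_distortion_tendsto_0: "(inverse_distortion \<eta> \<longlongrightarrow> 0) (at_right 0)"
proof -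
  have "eventually (\<lambda>t. M \<le> g t) at_top" for M
  proof -
    have "M \<le> g t" if "\<eta> (max M 0) \<le> t" for t
    proof -
      have "0 \<le> \<eta> (max M 0)"
        using \<eta> by (force simp: homeomorphism_def)
      then have "g (\<eta> (max M 0)) \<le> g t"
        using that by (rule inverse_homeo_mono)
      moreover have "g (\<eta> (max M 0)) = max M 0"
        using \<eta> by (simp add: homeomorphism_def)
      ultimately show ?thesis
        by linarith
    qed
    then show ?thesis
      by (auto simp: eventually_at_top_linorder)
  qed
  then have "filterlim g at_top at_top"
    by (simp add: filterlim_at_top)
  then have "filterlim (\<lambda>s. g (inverse s)) at_top (at_right 0)"
    using filterlim_compose filterlim_inverse_at_top_right by blast
  then have "((\<lambda>s. inverse (g (inverse s))) \<longlongrightarrow> 0) (at_right 0)"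
    by (rule tendsto_inverse_0_at_top)
  moreover have "eventually (\<lambda>s. inverse (g (inverse s)) = inverse_distortion \<eta> s) (at_right 0)"
    using eventually_at_right_less[of 0]
    by eventually_elim (simp add: inverse_distortion_eq inverse_eq_divide)
  ultimately show ?thesis
    by (rule Lim_transform_eventually)
qed

lemma inverse_distortion_ge:
  assumes "0 < t" "0 < u" "t \<le> \<eta> u"
  shows "1 / u \<le> inverse_distortion \<eta> (1 / t)"
proof -
  have "g t \<le> g (\<eta> u)"
    using assms by (intro inverse_homeo_mono) auto
  also have "\<dots> = u"
    using \<eta> \<open>0 < u\<close> by (simp add: homeomorphism_def)
  finally show ?thesis
    using assms inverse_homeo_pos[of t] by (simp add: inverse_distortion_eq frac_le)
qed

end

lemma homeomorphic_map_inv_into: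
  assumes "homeomorphic_map X Y f"
  shows "homeomorphic_map Y X (inv_into (topspace X) f)"
proof -
  obtain g where g: "homeomorphic_maps X Y f g"
    using assms homeomorphic_map_maps by blast
  then have "homeomorphic_map Y X g"
    using homeomorphic_maps_map by blast
  moreover have "g y = inv_into (topspace X) f y" if "y \<in> topspace Y" for y
    using g that homeomorphic_imp_injective_map[OF assms]
    by (metis homeomorphic_maps_map inv_into_f_f homeomorphic_imp_surjective_map imageI)
  ultimately show ?thesis
    by (rule homeomorphic_map_eq)
qed

lemma qs_homeo_inv_into:
  assumes A: "Metric_space A dA" and B: "Metric_space B dB"
    and \<eta>: "homeomorphism {0..} {0..} \<eta> g" and f: "qs_homeo A dA B dB \<eta> f"
  shows "qs_homeo B dB A dA (inverse_distortion \<eta>) (inv_into A f)"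
proof -
  interpret A: Metric_space A dA by (rule A)
  interpret B: Metric_space B dB by (rule B)
  have hom: "homeomorphic_map A.mtopology B.mtopology f"
    and ratio: "\<And>x y z. x \<in> A \<Longrightarrow> y \<in> A \<Longrightarrow> z \<in> A \<Longrightarrow> x \<noteq> z \<Longrightarrow>
        dB (f x) (f y) / dB (f x) (f z) \<le> \<eta> (dA x y / dA x z)"
    using f unfolding qs_homeo_def by auto
  have inj: "inj_on f A" and onto: "f ` A = B"
    using homeomorphic_imp_injective_map[OF hom] homeomorphic_imp_surjective_map[OF hom] by auto
  define h where "h = inv_into A f"
  have hA: "h x \<in> A" and fh: "f (h x) = x" if "x \<in> B" for x
    using that onto by (auto simp: h_def inv_into_into f_inv_into_f)
  have "dA (h x) (h y) / dA (h x) (h z) \<le> inverse_distortion \<eta> (dB x y / dB x z)"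
    if xyz: "x \<in> B" "y \<in> B" "z \<in> B" "x \<noteq> z" for x y z
  proof (cases "x = y")
    case True
    then show ?thesis
      using inverse_distortion_nonneg[OF \<eta>, of 0] hA[OF xyz(1)] xyz(1) by simp
  next
    case False
    then have pos: "0 < dA (h x) (h y)" "0 < dA (h x) (h z)" "0 < dB x y" "0 < dB x z"
      using xyz hA fh by (metis A.mdist_pos_eq B.mdist_pos_eq)+
    have "h x \<noteq> h y"
      using False fh[OF xyz(1)] fh[OF xyz(2)] by metis
    then have "dB x z / dB x y \<le> \<eta> (dA (h x) (h z) / dA (h x) (h y))"
      using ratio[OF hA[OF xyz(1)] hA[OF xyz(3)] hA[OF xyz(2)]] xyz by (simp add: fh)
    then show ?thesis
      using inverse_distortion_ge[OF \<eta>, of "dB x z / dB x y" "dA (h x) (h z) / dA (h x) (h y)"] pos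
      by simp
  qed
  moreover have "homeomorphic_map B.mtopology A.mtopology h"
    using homeomorphic_map_inv_into[OF hom] by (simp add: h_def)
  ultimately show ?thesis
    by (auto simp: qs_homeo_def h_def)
qed

context
  fixes X dX Y dY and f :: "'a \<Rightarrow> 'b" and e :: "real \<Rightarrow> real"
  assumes X: "Metric_space X dX" and Y: "Metric_space Y dY" and "f ` X \<subseteq> Y" and inj: "inj_on f X"
    and ratio: "\<And>x y z. x \<in> X \<Longrightarrow> y \<in> X \<Longrightarrow> z \<in> X \<Longrightarrow> x \<noteq> z \<Longrightarrow>
        dY (f x) (f y) / dY (f x) (f z) \<le> e (dX x y / dX x z)"
begin

interpretation X: Metric_space X dX by (rule X)
interpretation Y: Metric_space Y dY by (rule Y)

lemma ratio_bound_dist_pos: "x \<in> X \<Longrightarrow> y \<in> X \<Longrightarrow> x \<noteq> y \<Longrightarrow> 0 < dY (f x) (f y)"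
  using inj \<open>f ` X \<subseteq> Y\<close> by (metis Y.mdist_pos_eq image_subset_iff inj_on_contraD)

lemma ratio_bound_continuous:
  assumes e_0: "(e \<longlongrightarrow> 0) (at_right 0)" and x: "x \<in> X" and "\<epsilon> > 0"
  shows "\<exists>\<delta>>0. \<forall>y\<in>X. dX x y < \<delta> \<longrightarrow> dY (f x) (f y) < \<epsilon>"
proof (cases "\<exists>w\<in>X. w \<noteq> x")
  case False
  then show ?thesis
    using x \<open>f ` X \<subseteq> Y\<close> \<open>\<epsilon> > 0\<close> by (intro exI[of _ 1]) auto
next
  case True
  then obtain w where w: "w \<in> X" "w \<noteq> x"
    by blast
  define M where "M = dY (f x) (f w)"
  have "M > 0" "dX x w > 0"
    using ratio_bound_dist_pos x w by (auto simp: M_def)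
  have "eventually (\<lambda>s. e s < \<epsilon> / M) (at_right 0)"
    using order_tendstoD(2)[OF e_0] \<open>M > 0\<close> \<open>\<epsilon> > 0\<close> by simp
  then obtain \<delta> where "\<delta> > 0" and \<delta>: "\<And>s. 0 < s \<Longrightarrow> s < \<delta> \<Longrightarrow> e s < \<epsilon> / M"
    unfolding eventually_at_right_field by auto
  have "dY (f x) (f y) < \<epsilon>" if y: "y \<in> X" "dX x y < \<delta> * dX x w" for y
  proof (cases "y = x")
    case True
    then show ?thesis
      using x \<open>f ` X \<subseteq> Y\<close> \<open>\<epsilon> > 0\<close> by auto
  next
    case False
    then have "e (dX x y / dX x w) < \<epsilon> / M"
      using y x \<open>dX x w > 0\<close> by (intro \<delta>) (auto simp: divide_less_eq)
    moreover have "dY (f x) (f y) / M \<le> e (dX x y / dX x w)"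
      using ratio[OF x y(1) w(1)] w(2) by (simp add: M_def)
    ultimately have "dY (f x) (f y) / M < \<epsilon> / M"
      by linarith
    then show ?thesis
      using \<open>M > 0\<close> by (simp add: divide_less_cancel)
  qed
  then show ?thesis
    using \<open>\<delta> > 0\<close> \<open>dX x w > 0\<close> by (intro exI[of _ "\<delta> * dX x w"]) auto
qed

lemma ratio_bound_continuous_inverse:
  assumes e_pos: "\<And>s. 0 < s \<Longrightarrow> 0 < e s" and e_mono: "\<And>s t. 0 < s \<Longrightarrow> s \<le> t \<Longrightarrow> e s \<le> e t"
    and x: "x \<in> X" and "\<epsilon> > 0"
  shows "\<exists>\<delta>>0. \<forall>y\<in>X. dY (f x) (f y) < \<delta> \<longrightarrow> dX x y < \<epsilon>"
proof (cases "\<exists>w\<in>X. w \<noteq> x")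
  case False
  then show ?thesis
    using x \<open>\<epsilon> > 0\<close> by (intro exI[of _ 1]) auto
next
  case True
  then obtain w where w: "w \<in> X" "w \<noteq> x"
    by blast
  define M where "M = dY (f x) (f w)"
  define E where "E = e (dX x w / \<epsilon>)"
  have "M > 0" "E > 0"
    using ratio_bound_dist_pos x w \<open>\<epsilon> > 0\<close> e_pos by (auto simp: M_def E_def)
  have "dX x y < \<epsilon>" if y: "y \<in> X" "dY (f x) (f y) < M / E" for y
  proof (rule ccontr)
    assume "\<not> dX x y < \<epsilon>"
    then have "y \<noteq> x" "\<epsilon> \<le> dX x y"
      using x \<open>\<epsilon> > 0\<close> by auto
    then have "M / dY (f x) (f y) \<le> e (dX x w / dX x y)"
      using ratio[OF x w(1) y(1)] by (simp add: M_def)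
    also have "\<dots> \<le> E"
      unfolding E_def using x w \<open>\<epsilon> \<le> dX x y\<close> \<open>\<epsilon> > 0\<close>
      by (intro e_mono divide_left_mono) auto
    finally have "M / E \<le> dY (f x) (f y)"
      using \<open>M > 0\<close> \<open>E > 0\<close> ratio_bound_dist_pos[OF x y(1)] \<open>y \<noteq> x\<close>
      by (simp add: divide_le_eq field_simps)
    then show False
      using y(2) by simp
  qed
  then show ?thesis
    using \<open>M > 0\<close> \<open>E > 0\<close> by (intro exI[of _ "M / E"]) auto
qed

lemma qs_embedding_of_ratio_bound:
  assumes "\<And>s. 0 < s \<Longrightarrow> 0 < e s" "\<And>s t. 0 < s \<Longrightarrow> s \<le> t \<Longrightarrow> e s \<le> e t"
    and "(e \<longlongrightarrow> 0) (at_right 0)"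
  shows "qs_embedding X dX Y dY e f"
proof -
  have "homeomorphic_map X.mtopology (Metric_space.mtopology (f ` X) dY) f"
    using homeomorphic_map_onto_image_metric[OF X Y.subspace[OF \<open>f ` X \<subseteq> Y\<close>] inj]
      ratio_bound_continuous ratio_bound_continuous_inverse assms
    by blast
  then show ?thesis
    using ratio \<open>f ` X \<subseteq> Y\<close> by (auto simp: qs_embedding_def qs_homeo_def)
qed

end

section \<open>Ultralimits of rescaled spaces\<close>

text \<open>Points of the ultralimit of \<open>(X, d / scale n, q n)\<close> along \<open>U\<close> are the sequences at bounded
  rescaled distance from \<open>q\<close>, identified when their ultralimit distance vanishes; \<open>uspace\<close> realises
  this quotient by choosing a representative \<open>urep\<close> in every class. \<open>U \<le> sequentially\<close> says that
  \<open>U\<close> is nonprincipal.\<close>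

locale rescaled_ultralimit =
  fixes X :: "'a set" and d :: "'a \<Rightarrow> 'a \<Rightarrow> real" and scale :: "nat \<Rightarrow> real"
    and q :: "nat \<Rightarrow> 'a" and U :: "nat filter"
  assumes metric: "Metric_space X d" and scale_pos: "\<And>n. 0 < scale n" and base_in: "\<And>n. q n \<in> X"
    and ultra: "ultrafilter U" and U_le_sequentially: "U \<le> sequentially"
begin

interpretation X: Metric_space X d by (rule metric)

definition sdist :: "(nat \<Rightarrow> 'a) \<Rightarrow> (nat \<Rightarrow> 'a) \<Rightarrow> nat \<Rightarrow> real"
  where "sdist v w n = d (v n) (w n) / scale n"

definition bounded_seqs :: "(nat \<Rightarrow> 'a) set"
  where "bounded_seqs = {w. (\<forall>n. w n \<in> X) \<and> (\<exists>B. \<forall>n. sdist w q n \<le> B)}"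

definition udist :: "(nat \<Rightarrow> 'a) \<Rightarrow> (nat \<Rightarrow> 'a) \<Rightarrow> real"
  where "udist v w = (if v \<in> bounded_seqs \<and> w \<in> bounded_seqs then Lim U (sdist v w) else 0)"

lemma U_nontrivial: "U \<noteq> bot"
  using ultra by (simp add: ultrafilter_def)

lemma eventually_ge_U: "eventually (\<lambda>n. j \<le> n) U"
  using U_le_sequentially unfolding le_filter_def eventually_sequentially by blast

lemma sdist_nonneg: "0 \<le> sdist v w n"
  using scale_pos[of n] by (simp add: sdist_def)

lemma sdist_commute: "sdist v w = sdist w v"
  by (simp add: fun_eq_iff sdist_def X.commute)

lemma sdist_self: "v n \<in> X \<Longrightarrow> sdist v v n = 0"
  by (simp add: sdist_def)

lemma sdist_triangle:
  "v n \<in> X \<Longrightarrow> w n \<in> X \<Longrightarrow> u n \<in> X \<Longrightarrow> sdist v u n \<le> sdist v w n + sdist w u n"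
  using X.triangle[of "v n" "w n" "u n"] scale_pos[of n]
  by (simp add: sdist_def add_divide_distrib[symmetric] divide_right_mono)

lemma bounded_seqs_in: "w \<in> bounded_seqs \<Longrightarrow> w n \<in> X"
  by (simp add: bounded_seqs_def)

lemma base_in_bounded_seqs: "q \<in> bounded_seqs"
  using base_in sdist_self by (auto simp: bounded_seqs_def)

lemma sdist_bounded:
  assumes "v \<in> bounded_seqs" "w \<in> bounded_seqs"
  obtains B where "\<And>n. sdist v w n \<in> {0..B}"
proof -
  obtain B1 B2 where B1: "\<And>n. sdist v q n \<le> B1" and B2: "\<And>n. sdist w q n \<le> B2"
    using assms by (auto simp: bounded_seqs_def)
  have "sdist v w n \<in> {0..B1 + B2}" for n
  proof -
    have "sdist v w n \<le> sdist v q n + sdist w q n"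
      using assms base_in sdist_triangle[of v n q w] by (simp add: bounded_seqs_in sdist_commute)
    then show ?thesis
      using B1[of n] B2[of n] sdist_nonneg[of v w n] by simp
  qed
  then show ?thesis
    by (rule that)
qed

lemma udist_tendsto:
  assumes "v \<in> bounded_seqs" "w \<in> bounded_seqs"
  shows "(sdist v w \<longlongrightarrow> udist v w) U"
proof -
  obtain B where "\<And>n. sdist v w n \<in> {0..B}"
    using sdist_bounded[OF assms] by blast
  then have "eventually (\<lambda>n. sdist v w n \<in> {0..B}) U"
    by simp
  then obtain L where L: "(sdist v w \<longlongrightarrow> L) U"
    using ultrafilter_tendsto_in_compact[OF ultra compact_Icc] by blast
  then have "Lim U (sdist v w) = L"
    by (rule tendsto_Lim[OF U_nontrivial])
  then show ?thesis
    using L assms by (simp add: udist_def)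
qed

lemma udist_le: "v \<in> bounded_seqs \<Longrightarrow> w \<in> bounded_seqs \<Longrightarrow> eventually (\<lambda>n. sdist v w n \<le> c) U \<Longrightarrow> udist v w \<le> c"
  using udist_tendsto tendsto_upperbound[OF _ _ U_nontrivial] by blast

lemma udist_ge: "v \<in> bounded_seqs \<Longrightarrow> w \<in> bounded_seqs \<Longrightarrow> eventually (\<lambda>n. c \<le> sdist v w n) U \<Longrightarrow> c \<le> udist v w"
  using udist_tendsto tendsto_lowerbound[OF _ _ U_nontrivial] by blast

lemma eventually_sdist_less:
  "v \<in> bounded_seqs \<Longrightarrow> w \<in> bounded_seqs \<Longrightarrow> udist v w < c \<Longrightarrow> eventually (\<lambda>n. sdist v w n < c) U"
  using udist_tendsto order_tendstoD(2) by blast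

lemma eventually_sdist_greater:
  "v \<in> bounded_seqs \<Longrightarrow> w \<in> bounded_seqs \<Longrightarrow> c < udist v w \<Longrightarrow> eventually (\<lambda>n. c < sdist v w n) U"
  using udist_tendsto order_tendstoD(1) by blast

lemma udist_nonneg: "0 \<le> udist v w"
proof (cases "v \<in> bounded_seqs \<and> w \<in> bounded_seqs")
  case True
  then show ?thesis
    using sdist_nonneg by (intro udist_ge always_eventually) auto
next
  case False
  then show ?thesis
    by (auto simp: udist_def)
qed

lemma udist_commute: "udist v w = udist w v"
  unfolding udist_def by (metis sdist_commute)

lemma udist_self: "v \<in> bounded_seqs \<Longrightarrow> udist v v = 0"
  using udist_le[of v v 0] udist_nonneg[of v v] by (simp add: sdist_self bounded_seqs_in)

lemma udist_triangle:
  assumes "v \<in> bounded_seqs" "w \<in> bounded_seqs" "u \<in> bounded_seqs"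
  shows "udist v u \<le> udist v w + udist w u"
proof -
  have "((\<lambda>n. sdist v w n + sdist w u n) \<longlongrightarrow> udist v w + udist w u) U"
    using assms by (intro tendsto_add udist_tendsto)
  moreover have "eventually (\<lambda>n. sdist v u n \<le> sdist v w n + sdist w u n) U"
    using assms by (intro always_eventually allI sdist_triangle bounded_seqs_in)
  ultimately show ?thesis
    by (rule tendsto_le[OF U_nontrivial _ udist_tendsto[OF assms(1,3)]])
qed

definition urep :: "(nat \<Rightarrow> 'a) \<Rightarrow> nat \<Rightarrow> 'a"
  where "urep v = (SOME w. w \<in> bounded_seqs \<and> udist v w = 0)"

definition uspace :: "(nat \<Rightarrow> 'a) set"
  where "uspace = urep ` bounded_seqs"

definition ubase :: "nat \<Rightarrow> 'a"
  where "ubase = urep q"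

lemma urep:
  assumes "v \<in> bounded_seqs"
  shows "urep v \<in> bounded_seqs" and "udist v (urep v) = 0"
proof -
  have "\<exists>w. w \<in> bounded_seqs \<and> udist v w = 0"
    using assms udist_self by blast
  then have "urep v \<in> bounded_seqs \<and> udist v (urep v) = 0"
    unfolding urep_def by (rule someI_ex)
  then show "urep v \<in> bounded_seqs" "udist v (urep v) = 0"
    by auto
qed

lemma udist_zero_cong:
  assumes "v \<in> bounded_seqs" "w \<in> bounded_seqs" "udist v w = 0" "u \<in> bounded_seqs"
  shows "udist v u = udist w u"
  using udist_triangle[of v w u] udist_triangle[of w v u] udist_commute[of v w] assms by simp

lemma urep_eq:
  assumes "v \<in> bounded_seqs" "w \<in> bounded_seqs" "udist v w = 0"
  shows "urep v = urep w"
proof -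
  have "(\<lambda>u. u \<in> bounded_seqs \<and> udist v u = 0) = (\<lambda>u. u \<in> bounded_seqs \<and> udist w u = 0)"
    using udist_zero_cong[OF assms] by auto
  then show ?thesis
    by (simp add: urep_def)
qed

lemma udist_urep_left:
  assumes "v \<in> bounded_seqs" "w \<in> bounded_seqs"
  shows "udist (urep v) w = udist v w"
  using udist_zero_cong[of "urep v" v w] urep[OF assms(1)] udist_commute[of v "urep v"] assms by simp

lemma udist_urep:
  assumes "v \<in> bounded_seqs" "w \<in> bounded_seqs"
  shows "udist (urep v) (urep w) = udist v w"
  using udist_urep_left[OF assms(1) urep(1)[OF assms(2)]] udist_urep_left[OF assms(2,1)] udist_commute
  by simp

lemma uspace_subset: "uspace \<subseteq> bounded_seqs"
  using urep by (auto simp: uspace_def)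

lemma urep_uspace:
  assumes "a \<in> uspace"
  shows "urep a = a"
proof -
  obtain v where v: "v \<in> bounded_seqs" "a = urep v"
    using assms by (auto simp: uspace_def)
  have "udist (urep v) v = 0"
    using urep(2)[OF v(1)] udist_commute by simp
  then show ?thesis
    using urep_eq[of "urep v" v] urep(1)[OF v(1)] v by simp
qed

lemma ubase_in_uspace: "ubase \<in> uspace"
  using base_in_bounded_seqs by (simp add: ubase_def uspace_def)

lemma udist_ubase: "a \<in> bounded_seqs \<Longrightarrow> udist ubase a = udist q a"
  unfolding ubase_def using udist_urep_left base_in_bounded_seqs by blast

lemma Metric_space_uspace: "Metric_space uspace udist"
proof
  show "0 \<le> udist a b" "udist a b = udist b a" for a b
    by (rule udist_nonneg, rule udist_commute)
  show "udist a b = 0 \<longleftrightarrow> a = b" if ab: "a \<in> uspace" "b \<in> uspace" for a b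
  proof
    assume "udist a b = 0"
    then have "urep a = urep b"
      using ab uspace_subset by (intro urep_eq) auto
    then show "a = b"
      using ab urep_uspace by simp
  next
    assume "a = b"
    then show "udist a b = 0"
      using ab uspace_subset udist_self by auto
  qed
  show "udist a c \<le> udist a b + udist b c" if "a \<in> uspace" "b \<in> uspace" "c \<in> uspace" for a b c
    using that uspace_subset udist_triangle by blast
qed

lemma fast_Cauchy_diagonal:
  assumes c: "\<And>j. c j \<in> bounded_seqs" and fast: "\<And>j k. j \<le> k \<Longrightarrow> udist (c j) (c k) < inverse (Suc j)"
  obtains w where "w \<in> bounded_seqs" "\<And>j. udist (c j) w \<le> inverse (Suc j)"
proof -
  define F where "F k = {n. \<forall>i\<in>{..k}. \<forall>j\<in>{..i}. sdist (c j) (c i) n < inverse (Suc j)}" for k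
  have F_eventually: "eventually (\<lambda>n. n \<in> F k) U" for k
    unfolding F_def mem_Collect_eq
    by (intro eventually_ball_finite ballI eventually_sdist_less c fast finite_atMost) auto
  have F_0: "n \<in> F 0" for n
    using sdist_self[of "c 0" n] c bounded_seqs_in by (simp add: F_def)
  \<comment> \<open>At index \<open>n\<close> follow the latest \<open>c k\<close>, \<open>k \<le> n\<close>, whose first \<open>k\<close> estimates already hold at \<open>n\<close>.\<close>
  define K where "K n = (GREATEST k. k \<le> n \<and> n \<in> F k)" for n
  have K: "K n \<le> n" "n \<in> F (K n)" for n
    using GreatestI_nat[of "\<lambda>k. k \<le> n \<and> n \<in> F k" 0 n] F_0 by (auto simp: K_def)
  have K_ge: "j \<le> K n" if "j \<le> n" "n \<in> F j" for j n
    unfolding K_def by (rule Greatest_le_nat[of _ j n]) (use that in auto)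
  define w where "w n = c (K n) n" for n
  have w_close: "sdist (c j) w n < inverse (Suc j)" if "j \<le> n" "n \<in> F j" for j n
    using K(2)[of n] K_ge[OF that] by (simp add: F_def w_def sdist_def)
  have w_in: "w n \<in> X" for n
    using c bounded_seqs_in by (simp add: w_def)
  obtain B where B: "\<And>n. sdist (c 0) q n \<le> B"
    using c[of 0] by (auto simp: bounded_seqs_def)
  have "sdist w q n \<le> 1 + B" for n
  proof -
    have "sdist w q n \<le> sdist w (c 0) n + sdist (c 0) q n"
      using w_in c bounded_seqs_in base_in by (intro sdist_triangle) auto
    moreover have "sdist w (c 0) n < 1"
      using w_close[of 0 n] F_0 sdist_commute by simp
    ultimately show ?thesis
      using B[of n] by linarith
  qed
  then have w: "w \<in> bounded_seqs"
    using w_in by (auto simp: bounded_seqs_def)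
  have "udist (c j) w \<le> inverse (Suc j)" for j
  proof (rule udist_le[OF c w])
    show "eventually (\<lambda>n. sdist (c j) w n \<le> inverse (Suc j)) U"
      using eventually_conj[OF F_eventually[of j] eventually_ge_U[of j]]
      by eventually_elim (auto dest: w_close intro: less_imp_le)
  qed
  with w show ?thesis
    by (rule that)
qed

lemma fast_Cauchy_limit:
  assumes c: "\<And>j. c j \<in> uspace" and fast: "\<And>j k. j \<le> k \<Longrightarrow> udist (c j) (c k) < inverse (Suc j)"
  shows "\<exists>l\<in>uspace. \<forall>j. udist (c j) l \<le> inverse (Suc j)"
proof -
  have cS: "c j \<in> bounded_seqs" for j
    using c uspace_subset by blast
  obtain w where w: "w \<in> bounded_seqs" and close: "\<And>j. udist (c j) w \<le> inverse (Suc j)"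
    using fast_Cauchy_diagonal[OF cS fast] by blast
  have "udist (c j) (urep w) = udist (c j) w" for j
    using udist_urep[OF cS w] urep_uspace[OF c] by simp
  moreover have "urep w \<in> uspace"
    using w by (simp add: uspace_def)
  ultimately show ?thesis
    using close by (intro bexI[of _ "urep w"]) simp_all
qed

lemma mcomplete_uspace: "Metric_space.mcomplete uspace udist"
  using Metric_space.mcomplete_of_fast_Cauchy[OF Metric_space_uspace] fast_Cauchy_limit by blast

lemma uspace_finite_subset_realised:
  assumes "finite P" "P \<subseteq> uspace" "\<forall>a\<in>P. udist ubase a < R"
    and sep: "\<forall>a\<in>P. \<forall>b\<in>P. a \<noteq> b \<longrightarrow> \<epsilon> \<le> udist a b" and "\<epsilon> > 0"
  obtains n where "\<forall>a\<in>P. sdist q a n < R" "\<forall>a\<in>P. \<forall>b\<in>P. a \<noteq> b \<longrightarrow> \<epsilon> / 2 < sdist a b n"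
proof -
  have PS: "a \<in> bounded_seqs" if "a \<in> P" for a
    using that assms(2) uspace_subset by blast
  have "eventually (\<lambda>n. \<forall>a\<in>P. sdist q a n < R) U"
    using assms(1,3) udist_ubase PS base_in_bounded_seqs
    by (intro eventually_ball_finite ballI eventually_sdist_less) auto
  moreover have "eventually (\<lambda>n. \<forall>a\<in>P. \<forall>b\<in>P. a \<noteq> b \<longrightarrow> \<epsilon> / 2 < sdist a b n) U"
  proof (intro eventually_ball_finite ballI \<open>finite P\<close>)
    fix a b assume "a \<in> P" "b \<in> P"
    show "eventually (\<lambda>n. a \<noteq> b \<longrightarrow> \<epsilon> / 2 < sdist a b n) U"
    proof (cases "a = b")
      case False
      then have "\<epsilon> / 2 < udist a b"
        using sep \<open>a \<in> P\<close> \<open>b \<in> P\<close> \<open>\<epsilon> > 0\<close> by fastforce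
      then have "eventually (\<lambda>n. \<epsilon> / 2 < sdist a b n) U"
        using PS \<open>a \<in> P\<close> \<open>b \<in> P\<close> by (intro eventually_sdist_greater)
      then show ?thesis
        by (rule eventually_mono) simp
    qed simp
  qed
  ultimately have "eventually (\<lambda>n. (\<forall>a\<in>P. sdist q a n < R) \<and>
      (\<forall>a\<in>P. \<forall>b\<in>P. a \<noteq> b \<longrightarrow> \<epsilon> / 2 < sdist a b n)) U"
    by (rule eventually_conj)
  from eventually_happens'[OF U_nontrivial this] obtain n where
    "(\<forall>a\<in>P. sdist q a n < R) \<and> (\<forall>a\<in>P. \<forall>b\<in>P. a \<noteq> b \<longrightarrow> \<epsilon> / 2 < sdist a b n)"
    by (elim exE)
  then show ?thesis
    by (elim conjE) (rule that)
qed

lemma uspace_separated_card_bound: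
  assumes "doubling_mspace X d" "\<epsilon> > 0"
  obtains m where "\<And>P. P \<subseteq> uspace \<Longrightarrow> finite P \<Longrightarrow> \<forall>a\<in>P. udist ubase a < R \<Longrightarrow>
      \<forall>a\<in>P. \<forall>b\<in>P. a \<noteq> b \<longrightarrow> \<epsilon> \<le> udist a b \<Longrightarrow> card P \<le> m"
proof -
  define R' where "R' = max R 0 + 1"
  have "R' > 0" "R \<le> R'"
    by (auto simp: R'_def)
  have ratio_pos: "\<epsilon> / (4 * R') > 0"
    using \<open>R' > 0\<close> \<open>\<epsilon> > 0\<close> by simp
  obtain m where m: "\<And>P r. P \<subseteq> X \<Longrightarrow> finite P \<Longrightarrow> \<forall>x\<in>P. \<forall>y\<in>P. d x y \<le> r \<Longrightarrow>
      \<forall>x\<in>P. \<forall>y\<in>P. x \<noteq> y \<longrightarrow> \<epsilon> / (4 * R') * r < d x y \<Longrightarrow> card P \<le> m"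
    by (rule doubling_separated_card_bound[OF metric assms(1) ratio_pos]) (rule that)
  have "card P \<le> m" if P: "P \<subseteq> uspace" "finite P" "\<forall>a\<in>P. udist ubase a < R"
    and sep: "\<forall>a\<in>P. \<forall>b\<in>P. a \<noteq> b \<longrightarrow> \<epsilon> \<le> udist a b" for P
  proof -
    have PS: "a \<in> bounded_seqs" if "a \<in> P" for a
      using that P(1) uspace_subset by blast
    obtain n where n_base: "\<forall>a\<in>P. sdist q a n < R"
      and n_sep: "\<forall>a\<in>P. \<forall>b\<in>P. a \<noteq> b \<longrightarrow> \<epsilon> / 2 < sdist a b n"
      by (rule uspace_finite_subset_realised[OF P(2,1,3) sep \<open>\<epsilon> > 0\<close>]) (rule that)
    have sdist_eq: "d (a n) (b n) = scale n * sdist a b n" for a b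
      using scale_pos[of n] by (simp add: sdist_def)
    have "inj_on (\<lambda>a. a n) P"
      using n_sep \<open>\<epsilon> > 0\<close> PS bounded_seqs_in by (intro inj_onI) (fastforce simp: sdist_def)
    moreover have "card ((\<lambda>a. a n) ` P) \<le> m"
    proof (rule m)
      show "(\<lambda>a. a n) ` P \<subseteq> X" "finite ((\<lambda>a. a n) ` P)"
        using PS bounded_seqs_in \<open>finite P\<close> by auto
      have "sdist a b n \<le> 2 * R'" if "a \<in> P" "b \<in> P" for a b
      proof -
        have "sdist a b n \<le> sdist q a n + sdist q b n"
          using sdist_triangle[of a n q b] that PS bounded_seqs_in base_in by (simp add: sdist_commute)
        moreover have "sdist q a n < R" "sdist q b n < R"
          using n_base that by auto
        ultimately show ?thesis
          using \<open>R \<le> R'\<close> by linarith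
      qed
      then show "\<forall>x\<in>(\<lambda>a. a n) ` P. \<forall>y\<in>(\<lambda>a. a n) ` P. d x y \<le> scale n * (2 * R')"
        using scale_pos[of n] by (auto simp: sdist_eq)
      have scale_eq: "\<epsilon> / (4 * R') * (scale n * (2 * R')) = scale n * (\<epsilon> / 2)"
        using \<open>R' > 0\<close> by (simp add: field_simps)
      show "\<forall>x\<in>(\<lambda>a. a n) ` P. \<forall>y\<in>(\<lambda>a. a n) ` P. x \<noteq> y \<longrightarrow>
          \<epsilon> / (4 * R') * (scale n * (2 * R')) < d x y"
      proof (intro ballI impI)
        fix x y assume "x \<in> (\<lambda>a. a n) ` P" "y \<in> (\<lambda>a. a n) ` P" "x \<noteq> y"
        then obtain a b where ab: "a \<in> P" "b \<in> P" "x = a n" "y = b n" "a \<noteq> b"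
          by blast
        then have "scale n * (\<epsilon> / 2) < scale n * sdist a b n"
          using n_sep scale_pos[of n] by simp
        then show "\<epsilon> / (4 * R') * (scale n * (2 * R')) < d x y"
          unfolding scale_eq by (simp add: ab sdist_eq)
      qed
    qed
    ultimately show ?thesis
      by (simp add: card_image)
  qed
  then show ?thesis
    by (rule that)
qed

lemma uspace_ball_net:
  assumes "doubling_mspace X d" "\<epsilon> > 0"
  obtains N where "finite N" "N \<subseteq> uspace" "\<And>a. a \<in> uspace \<Longrightarrow> udist ubase a < R \<Longrightarrow> \<exists>b\<in>N. udist a b < \<epsilon>"
proof -
  obtain m where m: "\<And>P. P \<subseteq> uspace \<Longrightarrow> finite P \<Longrightarrow> \<forall>a\<in>P. udist ubase a < R \<Longrightarrow>
      \<forall>a\<in>P. \<forall>b\<in>P. a \<noteq> b \<longrightarrow> \<epsilon> \<le> udist a b \<Longrightarrow> card P \<le> m"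
    by (rule uspace_separated_card_bound[OF assms]) (rule that)
  have "\<exists>N. finite N \<and> N \<subseteq> {a \<in> uspace. udist ubase a < R} \<and>
      (\<forall>a\<in>{a \<in> uspace. udist ubase a < R}. \<exists>b\<in>N. udist a b < \<epsilon>)"
  proof (rule finite_net_of_separated_card_le[OF Metric_space_uspace _ \<open>\<epsilon> > 0\<close>])
    show "card P \<le> m" if "P \<subseteq> {a \<in> uspace. udist ubase a < R}" "finite P"
      "\<forall>a\<in>P. \<forall>b\<in>P. a \<noteq> b \<longrightarrow> \<epsilon> \<le> udist a b" for P
      using that by (intro m) auto
  qed auto
  then obtain N where "finite N" "N \<subseteq> uspace" "\<forall>a\<in>{a \<in> uspace. udist ubase a < R}. \<exists>b\<in>N. udist a b < \<epsilon>"
    by blast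
  then show ?thesis
    by (intro that) auto
qed

lemma uspace_inj_real:
  assumes "doubling_mspace X d"
  shows "\<exists>\<iota> :: (nat \<Rightarrow> 'a) \<Rightarrow> real. inj_on \<iota> uspace"
proof -
  have "\<forall>kj :: nat \<times> nat. \<exists>N. finite N \<and> N \<subseteq> uspace \<and>
      (\<forall>a\<in>uspace. udist ubase a < real (fst kj) \<longrightarrow> (\<exists>b\<in>N. udist a b < inverse (Suc (snd kj))))"
  proof
    fix kj :: "nat \<times> nat"
    obtain N where "finite N" "N \<subseteq> uspace"
      "\<And>a. a \<in> uspace \<Longrightarrow> udist ubase a < real (fst kj) \<Longrightarrow> \<exists>b\<in>N. udist a b < inverse (Suc (snd kj))"
      by (rule uspace_ball_net[OF assms, of "inverse (Suc (snd kj))" "fst kj"]) auto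
    then show "\<exists>N. finite N \<and> N \<subseteq> uspace \<and>
        (\<forall>a\<in>uspace. udist ubase a < real (fst kj) \<longrightarrow> (\<exists>b\<in>N. udist a b < inverse (Suc (snd kj))))"
      by blast
  qed
  then obtain N where "\<forall>kj :: nat \<times> nat. finite (N kj) \<and> N kj \<subseteq> uspace \<and>
      (\<forall>a\<in>uspace. udist ubase a < real (fst kj) \<longrightarrow> (\<exists>b\<in>N kj. udist a b < inverse (Suc (snd kj))))"
    by (rule choice[THEN exE])
  then have N: "\<And>kj. finite (N kj)" "\<And>kj. N kj \<subseteq> uspace"
    and net: "\<And>kj a. a \<in> uspace \<Longrightarrow> udist ubase a < real (fst kj) \<Longrightarrow> \<exists>b\<in>N kj. udist a b < inverse (Suc (snd kj))"
    by auto
  show ?thesis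
  proof (rule separable_metric_inj_real[OF Metric_space_uspace])
    show "countable (\<Union>kj. N kj)"
      using N(1) by (intro countable_UN) (auto intro: countable_finite)
    show "(\<Union>kj. N kj) \<subseteq> uspace"
      using N(2) by blast
    show "\<exists>b\<in>\<Union>kj. N kj. udist a b < \<epsilon>" if "a \<in> uspace" "\<epsilon> > 0" for a \<epsilon>
    proof -
      obtain k :: nat where "udist ubase a < k"
        using reals_Archimedean2 by blast
      moreover obtain j where "inverse (Suc j) < \<epsilon>"
        using reals_Archimedean \<open>\<epsilon> > 0\<close> by blast
      ultimately obtain b where "b \<in> N (k, j)" "udist a b < inverse (Suc j)"
        using net[of a "(k, j)"] \<open>a \<in> uspace\<close> by auto
      then show ?thesis
        using \<open>inverse (Suc j) < \<epsilon>\<close> by force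
    qed
  qed
qed

lemma eventually_not_U: "\<not> eventually P U \<Longrightarrow> eventually (\<lambda>m. \<not> P m) U"
  using ultra by (auto simp: ultrafilter_def)

lemma eventually_net_covers:
  assumes "N \<subseteq> uspace" "0 < r" "r < R"
    and net: "\<And>a. a \<in> uspace \<Longrightarrow> udist ubase a < R \<Longrightarrow> \<exists>b\<in>N. udist a b < \<epsilon>"
  shows "eventually (\<lambda>m. \<forall>x\<in>X. d (q m) x / scale m < r \<longrightarrow> (\<exists>b\<in>N. d x (b m) / scale m < \<epsilon>)) U"
proof (rule ccontr)
  \<comment> \<open>Otherwise choosing an uncovered point at each index gives a point of the ultralimit far from \<open>N\<close>.\<close>
  let ?bad = "\<lambda>m x. x \<in> X \<and> d (q m) x / scale m < r \<and> (\<forall>b\<in>N. \<epsilon> \<le> d x (b m) / scale m)"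
  assume "\<not> ?thesis"
  then have "eventually (\<lambda>m. \<not> (\<forall>x\<in>X. d (q m) x / scale m < r \<longrightarrow> (\<exists>b\<in>N. d x (b m) / scale m < \<epsilon>))) U"
    by (rule eventually_not_U)
  then have "eventually (\<lambda>m. \<exists>x. ?bad m x) U"
    by (rule eventually_mono) (auto simp: not_less)
  define v where "v m = (if \<exists>x. ?bad m x then SOME x. ?bad m x else q m)" for m
  have v_bad: "?bad m (v m)" if "\<exists>x. ?bad m x" for m
    using someI_ex[OF that] that by (simp add: v_def)
  have v_in: "v m \<in> X" and v_near: "sdist v q m \<le> r" for m
  proof -
    have "v m \<in> X \<and> sdist v q m \<le> r"
    proof (cases "\<exists>x. ?bad m x")
      case True
      then show ?thesis
        using v_bad[OF True] by (simp add: sdist_def X.commute)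
    next
      case False
      then have "v m = q m"
        unfolding v_def by (rule if_not_P)
      then show ?thesis
        using base_in[of m] \<open>0 < r\<close> by (simp add: sdist_def)
    qed
    then show "v m \<in> X" "sdist v q m \<le> r"
      by auto
  qed
  then have v_seq: "v \<in> bounded_seqs"
    by (auto simp: bounded_seqs_def)
  have "udist ubase (urep v) = udist v q"
    using udist_ubase udist_urep_left udist_commute v_seq base_in_bounded_seqs urep(1) by metis
  also have "\<dots> \<le> r"
    using v_near by (intro udist_le v_seq base_in_bounded_seqs always_eventually) auto
  finally obtain b where b: "b \<in> N" "udist (urep v) b < \<epsilon>"
    using net[of "urep v"] v_seq \<open>r < R\<close> by (auto simp: uspace_def)
  then have "eventually (\<lambda>m. sdist v b m < \<epsilon>) U"
    using v_seq \<open>N \<subseteq> uspace\<close> uspace_subset udist_urep_left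
    by (intro eventually_sdist_less) auto
  moreover have "eventually (\<lambda>m. \<epsilon> \<le> sdist v b m) U"
    using \<open>eventually (\<lambda>m. \<exists>x. ?bad m x) U\<close>
    by eventually_elim (use v_bad b(1) in \<open>auto simp: sdist_def\<close>)
  ultimately have "eventually (\<lambda>m. False) U"
    by eventually_elim simp
  then show False
    using U_nontrivial by (simp add: trivial_limit_def)
qed

lemma eventually_pointed_GH_approx:
  assumes "doubling_mspace X d" "0 < r" "0 < \<epsilon>"
  shows "eventually (\<lambda>m. pointed_GH_approx X (\<lambda>x y. d x y / scale m) (q m) uspace udist ubase r \<epsilon>) U"
proof -
  define e where "e = \<epsilon> / 4"
  have "e > 0"
    using \<open>0 < \<epsilon>\<close> by (simp add: e_def)
  obtain N0 where "finite N0" "N0 \<subseteq> uspace"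
    and net: "\<And>a. a \<in> uspace \<Longrightarrow> udist ubase a < r + 1 \<Longrightarrow> \<exists>b\<in>N0. udist a b < e"
    by (rule uspace_ball_net[OF assms(1) \<open>e > 0\<close>, where R = "r + 1"]) (rule that)
  define N where "N = insert ubase N0"
  have N: "finite N" "N \<subseteq> uspace" "ubase \<in> N"
    using \<open>finite N0\<close> \<open>N0 \<subseteq> uspace\<close> ubase_in_uspace by (auto simp: N_def)
  then have N_seqs: "a \<in> bounded_seqs" if "a \<in> N" for a
    using that uspace_subset by blast
  have net': "\<exists>b\<in>N. udist a b < e" if "a \<in> uspace" "udist ubase a < r + 1" for a
    using net[OF that] by (auto simp: N_def)
  have "eventually (\<lambda>m. \<bar>sdist a b m - udist a b\<bar> < e) U" if "a \<in> N" "b \<in> N" for a b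
    using tendstoD[OF udist_tendsto \<open>e > 0\<close>] N_seqs that by (simp add: dist_real_def)
  then have "eventually (\<lambda>m. \<forall>a\<in>N. \<forall>b\<in>N. \<bar>sdist a b m - udist a b\<bar> < e) U"
    using N(1) by (intro eventually_ball_finite ballI)
  moreover have "eventually (\<lambda>m. sdist q ubase m < e) U"
    using udist_ubase[OF base_in_bounded_seqs] udist_self[OF base_in_bounded_seqs] udist_commute
      \<open>e > 0\<close> N_seqs[OF N(3)] base_in_bounded_seqs
    by (intro eventually_sdist_less) auto
  moreover have "eventually (\<lambda>m. \<forall>x\<in>X. d (q m) x / scale m < r \<longrightarrow> (\<exists>b\<in>N. d x (b m) / scale m < e)) U"
    using N(2) \<open>0 < r\<close> net' by (intro eventually_net_covers) auto
  ultimately show ?thesis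
  proof eventually_elim
    case (elim m)
    have "pointed_GH_approx X (\<lambda>x y. d x y / scale m) (q m) uspace udist ubase r (4 * e)"
    proof (rule pointed_GH_approx_of_net[where \<phi> = "\<lambda>b. b m" and N = N])
      show "Metric_space X (\<lambda>x y. d x y / scale m)"
        using metric scale_pos by (rule Metric_space_scaled)
      show "\<bar>d (a m) (b m) / scale m - udist a b\<bar> < e" if "a \<in> N" "b \<in> N" for a b
        using elim that by (simp add: sdist_def)
      show "d (q m) (ubase m) / scale m < e"
        using elim by (simp add: sdist_def)
      show "\<exists>b\<in>N. udist w b < e" if "w \<in> uspace" "udist ubase w < r" for w
        using net' that by simp
    qed (use elim N N_seqs bounded_seqs_in base_in Metric_space_uspace \<open>e > 0\<close> in auto)
    then show ?case
      by (simp add: e_def)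
  qed
qed

lemma pGH_converges_reindexed:
  assumes "doubling_mspace X d"
  obtains \<sigma> where "filterlim \<sigma> sequentially sequentially"
    and "pGH_converges (\<lambda>n. X) (\<lambda>n. q (\<sigma> n)) (\<lambda>n x y. d x y / scale (\<sigma> n)) uspace ubase udist"
proof -
  have approx_mono: "pointed_GH_approx X (\<lambda>x y. d x y / scale m) (q m) uspace udist ubase r \<epsilon>"
    if "pointed_GH_approx X (\<lambda>x y. d x y / scale m) (q m) uspace udist ubase r' \<epsilon>'"
      "0 < r" "r \<le> r'" "0 < \<epsilon>'" "2 * \<epsilon>' \<le> \<epsilon>" for m r r' \<epsilon> \<epsilon>'
    using pointed_GH_approx_mono[OF Metric_space_scaled[OF metric scale_pos] Metric_space_uspace
        base_in ubase_in_uspace] that by blast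
  have approx_eventually:
    "eventually (\<lambda>m. pointed_GH_approx X (\<lambda>x y. d x y / scale m) (q m) uspace udist ubase r \<epsilon>) U"
    if "0 < r" "0 < \<epsilon>" for r \<epsilon>
    using eventually_pointed_GH_approx[OF assms that] .
  have "\<exists>\<sigma>. filterlim \<sigma> sequentially sequentially \<and> (\<forall>r>0. \<forall>\<epsilon>>0. \<exists>n0. \<forall>n>n0.
      pointed_GH_approx X (\<lambda>x y. d x y / scale (\<sigma> n)) (q (\<sigma> n)) uspace udist ubase r \<epsilon>)"
    by (rule diagonal_reindexing)
      (use U_nontrivial U_le_sequentially approx_eventually approx_mono in blast)+
  then obtain \<sigma> where "filterlim \<sigma> sequentially sequentially"
    and "\<forall>r>0. \<forall>\<epsilon>>0. \<exists>n0. \<forall>n>n0.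
      pointed_GH_approx X (\<lambda>x y. d x y / scale (\<sigma> n)) (q (\<sigma> n)) uspace udist ubase r \<epsilon>"
    by blast
  moreover have "Metric_space uspace udist" "Metric_space.mcomplete uspace udist" "ubase \<in> uspace"
    by (rule Metric_space_uspace mcomplete_uspace ubase_in_uspace)+
  ultimately show ?thesis
    using that by (auto simp: pGH_converges_iff_pointed_GH_approx)
qed

lemma weak_tangent_qs_embedding:
  assumes "doubling_mspace X d" "scale \<longlonglongrightarrow> 0" "(\<lambda>n. d (q n) p) \<longlonglongrightarrow> 0"
    and F: "F ` X \<subseteq> uspace" "inj_on F X"
    and ratio: "\<And>x y z. x \<in> X \<Longrightarrow> y \<in> X \<Longrightarrow> z \<in> X \<Longrightarrow> x \<noteq> z \<Longrightarrow>
        udist (F x) (F y) / udist (F x) (F z) \<le> e (d x y / d x z)"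
    and e_pos: "\<And>s. 0 < s \<Longrightarrow> 0 < e s"
    and e_mono: "\<And>s t. 0 < s \<Longrightarrow> s \<le> t \<Longrightarrow> e s \<le> e t"
    and e_0: "(e \<longlongrightarrow> 0) (at_right 0)"
  shows "\<exists>(T :: real set) t dT f. (T, t, dT) \<in> weak_tangents X d p \<and> qs_embedding X d T dT e f"
proof -
  obtain \<sigma> where \<sigma>: "filterlim \<sigma> sequentially sequentially"
    and conv: "pGH_converges (\<lambda>n. X) (\<lambda>n. q (\<sigma> n)) (\<lambda>n x y. d x y / scale (\<sigma> n)) uspace ubase udist"
    using pGH_converges_reindexed[OF assms(1)] by blast
  obtain \<iota> :: "(nat \<Rightarrow> 'a) \<Rightarrow> real" where \<iota>: "inj_on \<iota> uspace"
    using uspace_inj_real[OF assms(1)] by blast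
  define dT where "dT = transport_metric \<iota> uspace udist"
  have "(\<iota> ` uspace, \<iota> ubase, dT) \<in> weak_tangents X d p"
    unfolding weak_tangents_def
  proof (intro CollectI case_prodI exI conjI allI)
    show "(\<lambda>n. scale (\<sigma> n)) \<longlonglongrightarrow> 0" "(\<lambda>n. d (q (\<sigma> n)) p) \<longlonglongrightarrow> 0"
      using filterlim_compose[OF assms(2) \<sigma>] filterlim_compose[OF assms(3) \<sigma>] by auto
    show "pGH_converges (\<lambda>n. X) (\<lambda>n. q (\<sigma> n)) (\<lambda>n x y. d x y / scale (\<sigma> n)) (\<iota> ` uspace) (\<iota> ubase) dT"
      unfolding dT_def using conv \<iota> by (rule pGH_converges_transport)
  qed (use scale_pos base_in in auto)
  moreover have "qs_embedding X d (\<iota> ` uspace) dT e (\<iota> \<circ> F)"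
  proof (rule qs_embedding_of_ratio_bound[OF metric _ _ _ _ e_pos e_mono e_0])
    show "Metric_space (\<iota> ` uspace) dT"
      unfolding dT_def using Metric_space_uspace \<iota> by (rule Metric_space_transport_metric)
    show "(\<iota> \<circ> F) ` X \<subseteq> \<iota> ` uspace" "inj_on (\<iota> \<circ> F) X"
      using F \<iota> by (auto simp: comp_inj_on inj_on_subset)
    show "dT ((\<iota> \<circ> F) x) ((\<iota> \<circ> F) y) / dT ((\<iota> \<circ> F) x) ((\<iota> \<circ> F) z) \<le> e (d x y / d x z)"
      if "x \<in> X" "y \<in> X" "z \<in> X" "x \<noteq> z" for x y z
    proof -
      have "F x \<in> uspace" "F y \<in> uspace" "F z \<in> uspace"
        using F(1) that by auto
      then show ?thesis
        using ratio[OF that] \<iota> by (simp add: dT_def)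
    qed
  qed
  ultimately show ?thesis
    by blast
qed

end

section \<open>Blow-ups by uniformly quasisymmetric maps\<close>

locale qs_blowup = rescaled_ultralimit +
  fixes h :: "nat \<Rightarrow> 'a \<Rightarrow> 'a" and e :: "real \<Rightarrow> real" and x0 x1 :: 'a
  assumes x0: "x0 \<in> X" and x1: "x1 \<in> X" and x01: "x0 \<noteq> x1"
    and h_in: "\<And>n x. x \<in> X \<Longrightarrow> h n x \<in> X" and h_inj: "\<And>n. inj_on (h n) X"
    and h_ratio: "\<And>n x y z. x \<in> X \<Longrightarrow> y \<in> X \<Longrightarrow> z \<in> X \<Longrightarrow> x \<noteq> z \<Longrightarrow>
        d (h n x) (h n y) / d (h n x) (h n z) \<le> e (d x y / d x z)"
    and scale_eq: "\<And>n. scale n = d (h n x0) (h n x1)" and base_eq: "\<And>n. q n = h n x0"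
    and e_pos: "\<And>s. 0 < s \<Longrightarrow> 0 < e s"
begin

interpretation X: Metric_space X d by (rule metric)

definition orbit :: "'a \<Rightarrow> nat \<Rightarrow> 'a"
  where "orbit x n = h n x"

lemma h_dist_pos: "x \<in> X \<Longrightarrow> y \<in> X \<Longrightarrow> x \<noteq> y \<Longrightarrow> 0 < d (h n x) (h n y)"
  using inj_onD[OF h_inj[of n]] h_in by (auto simp: X.mdist_pos_eq)

lemma orbit_bounded: "x \<in> X \<Longrightarrow> orbit x \<in> bounded_seqs"
  using h_ratio[OF x0 _ x1 x01] h_in
  by (auto simp: bounded_seqs_def sdist_def orbit_def scale_eq base_eq X.commute)

lemma sdist_orbit_le:
  assumes "x \<in> X" "y \<in> X" "w \<in> X" "x \<noteq> y"
  shows "sdist (orbit x) (orbit w) n \<le> e (d x w / d x y) * sdist (orbit x) (orbit y) n"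
proof -
  have "d (h n x) (h n w) / d (h n x) (h n y) \<le> e (d x w / d x y)"
    using h_ratio assms by blast
  then have "d (h n x) (h n w) \<le> e (d x w / d x y) * d (h n x) (h n y)"
    using h_dist_pos[OF assms(1,2,4)] by (simp add: pos_divide_le_eq)
  then have "d (h n x) (h n w) / scale n \<le> e (d x w / d x y) * d (h n x) (h n y) / scale n"
    using scale_pos[of n] by (simp add: divide_right_mono less_imp_le)
  then show ?thesis
    by (simp add: sdist_def orbit_def)
qed

lemma sdist_orbit_pair: "sdist (orbit x0) (orbit x1) n = 1"
  using scale_pos[of n] by (simp add: sdist_def orbit_def scale_eq)

lemma sdist_orbit_lower_bound:
  assumes "x \<in> X" "y \<in> X" "x \<noteq> y"
  obtains c where "c > 0" "\<And>n. c \<le> sdist (orbit x) (orbit y) n"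
proof -
  have "\<exists>w\<in>X. w \<noteq> x \<and> (\<exists>c>0. \<forall>n. c \<le> sdist (orbit x) (orbit w) n)"
  proof (cases "x = x0")
    case True
    then show ?thesis
      using x1 x01 sdist_orbit_pair by (intro bexI[of _ x1] conjI exI[of _ 1]) auto
  next
    case False
    define E where "E = e (d x0 x1 / d x0 x)"
    have "E > 0"
      using False x0 x1 x01 assms(1) e_pos by (simp add: E_def X.mdist_pos_eq)
    have "1 \<le> E * sdist (orbit x) (orbit x0) n" for n
      using sdist_orbit_le[OF x0 assms(1) x1, of n] False sdist_orbit_pair sdist_commute
      by (simp add: E_def)
    then have "1 / E \<le> sdist (orbit x) (orbit x0) n" for n
      using \<open>E > 0\<close> by (simp add: divide_le_eq mult.commute)
    then show ?thesis
      using x0 False \<open>E > 0\<close> by (intro bexI[of _ x0] conjI exI[of _ "1 / E"]) auto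
  qed
  then obtain w c where w: "w \<in> X" "w \<noteq> x" and "c > 0" and c: "\<And>n. c \<le> sdist (orbit x) (orbit w) n"
    by blast
  define E where "E = e (d x w / d x y)"
  have "E > 0"
    using assms w e_pos by (simp add: E_def X.mdist_pos_eq)
  have "c \<le> E * sdist (orbit x) (orbit y) n" for n
    using c[of n] sdist_orbit_le[OF assms(1,2) w(1) assms(3), of n] by (simp add: E_def)
  then have "c / E \<le> sdist (orbit x) (orbit y) n" for n
    using \<open>E > 0\<close> by (simp add: divide_le_eq mult.commute)
  moreover have "c / E > 0"
    using \<open>c > 0\<close> \<open>E > 0\<close> by simp
  ultimately show ?thesis
    using that by blast
qed

definition limit_map :: "'a \<Rightarrow> nat \<Rightarrow> 'a"
  where "limit_map x = urep (orbit x)"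

lemma limit_map_in: "x \<in> X \<Longrightarrow> limit_map x \<in> uspace"
  using orbit_bounded by (simp add: limit_map_def uspace_def)

lemma udist_limit_map:
  "x \<in> X \<Longrightarrow> y \<in> X \<Longrightarrow> udist (limit_map x) (limit_map y) = udist (orbit x) (orbit y)"
  using udist_urep orbit_bounded by (simp add: limit_map_def)

lemma udist_limit_map_pos:
  assumes "x \<in> X" "y \<in> X" "x \<noteq> y"
  shows "0 < udist (limit_map x) (limit_map y)"
proof -
  obtain c where "c > 0" "\<And>n. c \<le> sdist (orbit x) (orbit y) n"
    using sdist_orbit_lower_bound[OF assms] by blast
  then have "c \<le> udist (orbit x) (orbit y)"
    using assms orbit_bounded by (intro udist_ge always_eventually) auto
  then show ?thesis
    using \<open>c > 0\<close> assms by (simp add: udist_limit_map)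
qed

lemma inj_on_limit_map: "inj_on limit_map X"
proof (rule inj_onI, rule ccontr)
  fix x y assume "x \<in> X" "y \<in> X" "limit_map x = limit_map y" "x \<noteq> y"
  then show False
    using udist_limit_map_pos[of x y] udist_self[of "limit_map y"] limit_map_in uspace_subset by auto
qed

lemma limit_map_ratio:
  assumes "x \<in> X" "y \<in> X" "z \<in> X" "x \<noteq> z"
  shows "udist (limit_map x) (limit_map y) / udist (limit_map x) (limit_map z) \<le> e (d x y / d x z)"
proof -
  have "((\<lambda>n. sdist (orbit x) (orbit y) n / sdist (orbit x) (orbit z) n) \<longlongrightarrow>
      udist (orbit x) (orbit y) / udist (orbit x) (orbit z)) U"
    using udist_limit_map_pos[OF assms(1,3,4)] assms orbit_bounded
    by (intro tendsto_divide udist_tendsto) (auto simp: udist_limit_map)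
  moreover have "sdist (orbit x) (orbit y) n / sdist (orbit x) (orbit z) n \<le> e (d x y / d x z)" for n
    using h_ratio[OF assms] scale_pos[of n] by (simp add: sdist_def orbit_def)
  ultimately show ?thesis
    using assms by (simp add: udist_limit_map tendsto_upperbound[OF _ _ U_nontrivial])
qed

end

section \<open>Self-quasisymmetric points\<close>

lemma self_qs_at_imp_qs_embedding_into_ball:
  assumes X: "Metric_space X d" and \<eta>: "homeomorphism {0..} {0..} \<eta> g"
    and "self_qs_at X d \<eta> x" and "r > 0"
  obtains h where "qs_embedding X d X d (inverse_distortion \<eta>) h" "h ` X \<subseteq> Metric_space.mball X d x r"
proof -
  interpret Metric_space X d by (rule X)
  obtain rx where "rx > 0" and small: "\<And>r. 0 < r \<Longrightarrow> r < rx \<Longrightarrow>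
      \<exists>V f. V \<subseteq> mball x r \<and> qs_homeo V d X d \<eta> f \<and> f ` V = X"
    using \<open>self_qs_at X d \<eta> x\<close> unfolding self_qs_at_def by blast
  have "min r (rx / 2) < rx"
    using \<open>rx > 0\<close> by linarith
  then obtain V f where V: "V \<subseteq> mball x (min r (rx / 2))" and f: "qs_homeo V d X d \<eta> f"
    using small[of "min r (rx / 2)"] \<open>r > 0\<close> \<open>rx > 0\<close> by auto
  have "V \<subseteq> X"
    using V mball_subset_mspace by blast
  have "qs_homeo X d V d (inverse_distortion \<eta>) (inv_into V f)"
    by (rule qs_homeo_inv_into[OF subspace[OF \<open>V \<subseteq> X\<close>] X \<eta> f])
  moreover from this have "inv_into V f ` X = V"
    using homeomorphic_imp_surjective_map subspace[OF \<open>V \<subseteq> X\<close>]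
    by (fastforce simp: qs_homeo_def Metric_space.topspace_mtopology)
  moreover have "mball x (min r (rx / 2)) \<subseteq> mball x r"
    by (rule mball_subset_concentric) simp
  ultimately show ?thesis
    using that[of "inv_into V f"] V \<open>V \<subseteq> X\<close> by (auto simp: qs_embedding_def)
qed

lemma self_qs_seq_imp_shrinking_embeddings:
  assumes X: "Metric_space X d" and \<eta>: "homeomorphism {0..} {0..} \<eta> g"
    and self_qs: "\<And>n. self_qs_at X d \<eta> (ps n)"
  obtains h where "\<And>n. qs_embedding X d X d (inverse_distortion \<eta>) (h n)"
    and "\<And>n. h n ` X \<subseteq> Metric_space.mball X d (ps n) (inverse (Suc n))"
proof -
  have "\<forall>n. \<exists>h. qs_embedding X d X d (inverse_distortion \<eta>) h \<and>
      h ` X \<subseteq> Metric_space.mball X d (ps n) (inverse (Suc n))"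
  proof
    fix n
    show "\<exists>h. qs_embedding X d X d (inverse_distortion \<eta>) h \<and>
        h ` X \<subseteq> Metric_space.mball X d (ps n) (inverse (Suc n))"
      by (rule self_qs_at_imp_qs_embedding_into_ball[OF X \<eta> self_qs]) auto
  qed
  then obtain h where h: "\<forall>n. qs_embedding X d X d (inverse_distortion \<eta>) (h n) \<and>
      h n ` X \<subseteq> Metric_space.mball X d (ps n) (inverse (Suc n))"
    by (rule choice[THEN exE])
  show ?thesis
    by (rule that) (use h in auto)
qed

lemma weak_tangent_qs_embedding_singleton:
  assumes "Metric_space X d" "doubling_mspace X d" "X = {p}"
    and e_pos: "\<And>s. 0 < s \<Longrightarrow> 0 < e s"
    and e_mono: "\<And>s t. 0 < s \<Longrightarrow> s \<le> t \<Longrightarrow> e s \<le> e t"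
    and e_0: "(e \<longlongrightarrow> 0) (at_right 0)"
  shows "\<exists>(T :: real set) t dT f. (T, t, dT) \<in> weak_tangents X d p \<and> qs_embedding X d T dT e f"
proof -
  obtain U :: "nat filter" where "ultrafilter U" "U \<le> sequentially"
    using ultrafilter_le_exists[of sequentially] by auto
  then interpret rescaled_ultralimit X d "\<lambda>n. inverse (Suc n)" "\<lambda>n. p" U
    using assms by (intro rescaled_ultralimit.intro) auto
  have "d p p = 0"
    using Metric_space.mdist_zero[OF assms(1)] assms(3) by blast
  then show ?thesis
    by (intro weak_tangent_qs_embedding[where F = "\<lambda>x. ubase"])
      (use assms LIMSEQ_inverse_real_of_nat ubase_in_uspace in auto)
qed

lemma weak_tangent_qs_embedding_of_shrinking_maps:
  assumes X: "Metric_space X d" and "doubling_mspace X d" and "p \<in> X"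
    and "x0 \<in> X" "x1 \<in> X" "x0 \<noteq> x1"
    and h: "\<And>n. qs_embedding X d X d e (h n)"
    and ball: "\<And>n. h n ` X \<subseteq> Metric_space.mball X d (ps n) (r n)"
    and "r \<longlonglongrightarrow> 0" "(\<lambda>n. d (ps n) p) \<longlonglongrightarrow> 0"
    and e_pos: "\<And>s. 0 < s \<Longrightarrow> 0 < e s"
    and e_mono: "\<And>s t. 0 < s \<Longrightarrow> s \<le> t \<Longrightarrow> e s \<le> e t"
    and e_0: "(e \<longlongrightarrow> 0) (at_right 0)"
  shows "\<exists>(T :: real set) t dT f. (T, t, dT) \<in> weak_tangents X d p \<and> qs_embedding X d T dT e f"
proof -
  interpret Metric_space X d by (rule X)
  have h_in: "h n x \<in> X" and near: "d (h n x) (ps n) < r n" if "x \<in> X" for n x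
    using ball[of n] that commute by auto
  have ps_in: "ps n \<in> X" for n
    using ball[of n] \<open>x0 \<in> X\<close> by auto
  have h_inj: "inj_on (h n) X" for n
    using h[of n] homeomorphic_imp_injective_map subspace[of "h n ` X"]
    by (fastforce simp: qs_embedding_def qs_homeo_def Metric_space.topspace_mtopology)
  have h_ratio: "d (h n x) (h n y) / d (h n x) (h n z) \<le> e (d x y / d x z)"
    if "x \<in> X" "y \<in> X" "z \<in> X" "x \<noteq> z" for n x y z
    using h[of n] that by (auto simp: qs_embedding_def qs_homeo_def)
  obtain U :: "nat filter" where "ultrafilter U" "U \<le> sequentially"
    using ultrafilter_le_exists[of sequentially] by auto
  then interpret qs_blowup X d "\<lambda>n. d (h n x0) (h n x1)" "\<lambda>n. h n x0" U h e x0 x1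
    using X h_in h_inj h_ratio e_pos \<open>x0 \<in> X\<close> \<open>x1 \<in> X\<close> \<open>x0 \<noteq> x1\<close> inj_onD[OF h_inj]
    by (intro qs_blowup.intro rescaled_ultralimit.intro qs_blowup_axioms.intro) (auto simp: mdist_pos_eq)
  have scale_0: "(\<lambda>n. d (h n x0) (h n x1)) \<longlonglongrightarrow> 0"
  proof (rule tendsto_sandwich[of "\<lambda>n. 0" _ _ "\<lambda>n. 2 * r n"])
    have "d (h n x0) (h n x1) \<le> 2 * r n" for n
    proof -
      have "d (h n x0) (h n x1) \<le> d (h n x0) (ps n) + d (h n x1) (ps n)"
        using triangle[of "h n x0" "ps n" "h n x1"] commute[of "ps n" "h n x1"]
          h_in ps_in \<open>x0 \<in> X\<close> \<open>x1 \<in> X\<close> by simp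
      then show ?thesis
        using near[OF \<open>x0 \<in> X\<close>, of n] near[OF \<open>x1 \<in> X\<close>, of n] by linarith
    qed
    then show "eventually (\<lambda>n. d (h n x0) (h n x1) \<le> 2 * r n) sequentially"
      by simp
    show "(\<lambda>n. 2 * r n) \<longlonglongrightarrow> 0"
      using tendsto_mult_right_zero[OF \<open>r \<longlonglongrightarrow> 0\<close>] by simp
  qed auto
  moreover have base_p: "(\<lambda>n. d (h n x0) p) \<longlonglongrightarrow> 0"
  proof (rule tendsto_sandwich[of "\<lambda>n. 0" _ _ "\<lambda>n. r n + d (ps n) p"])
    have "d (h n x0) p \<le> r n + d (ps n) p" for n
    proof -
      have "d (h n x0) p \<le> d (h n x0) (ps n) + d (ps n) p"
        using triangle[of "h n x0" "ps n" p] h_in ps_in \<open>x0 \<in> X\<close> \<open>p \<in> X\<close> by simp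
      then show ?thesis
        using near[OF \<open>x0 \<in> X\<close>, of n] by linarith
    qed
    then show "eventually (\<lambda>n. d (h n x0) p \<le> r n + d (ps n) p) sequentially"
      by simp
    show "(\<lambda>n. r n + d (ps n) p) \<longlonglongrightarrow> 0"
      using tendsto_add[OF \<open>r \<longlonglongrightarrow> 0\<close> \<open>(\<lambda>n. d (ps n) p) \<longlonglongrightarrow> 0\<close>] by simp
  qed auto
  moreover have "limit_map ` X \<subseteq> uspace"
    using limit_map_in by blast
  ultimately show ?thesis
    using weak_tangent_qs_embedding[OF \<open>doubling_mspace X d\<close> scale_0 base_p _ inj_on_limit_map
        limit_map_ratio e_pos e_mono e_0]
    by blast
qed

theorem theorem1p2:
  fixes X :: "'a set" and dX :: "'a \<Rightarrow> 'a \<Rightarrow> real" and p :: 'a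
    and \<eta> :: "real \<Rightarrow> real"
  assumes "Metric_space X dX"
    and "proper_mspace X dX"
    and "doubling_mspace X dX"
    and "p \<in> X"
    and "\<exists>g. homeomorphism {0..} {0..} \<eta> g"
    and "\<exists>ps. (\<forall>n. ps n \<in> X) \<and> (\<lambda>n. dX (ps n) p) \<longlonglongrightarrow> 0 \<and>
               (\<forall>n. self_qs_at X dX \<eta> (ps n))"
  shows "\<exists>(T :: real set) t dT f.
           (T, t, dT) \<in> weak_tangents X dX p \<and>
           qs_embedding X dX T dT (\<lambda>s. 1 / inv_into {0..} \<eta> (1 / s)) f"
proof -
  obtain g where \<eta>: "homeomorphism {0..} {0..} \<eta> g"
    using assms(5) by blast
  obtain ps where ps: "(\<lambda>n. dX (ps n) p) \<longlonglongrightarrow> 0" "\<And>n. self_qs_at X dX \<eta> (ps n)"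
    using assms(6) by blast
  obtain h where h: "\<And>n. qs_embedding X dX X dX (inverse_distortion \<eta>) (h n)"
    and ball: "\<And>n. h n ` X \<subseteq> Metric_space.mball X dX (ps n) (inverse (Suc n))"
    by (rule self_qs_seq_imp_shrinking_embeddings[OF assms(1) \<eta> ps(2)]) (rule that)
  note distortion = inverse_distortion_pos[OF \<eta>] inverse_distortion_mono[OF \<eta>]
    inverse_distortion_tendsto_0[OF \<eta>]
  have "\<exists>(T :: real set) t dT f. (T, t, dT) \<in> weak_tangents X dX p \<and>
      qs_embedding X dX T dT (inverse_distortion \<eta>) f"
  proof (cases "X = {p}")
    case True
    then show ?thesis
      by (rule weak_tangent_qs_embedding_singleton[OF assms(1,3) _ distortion])
  next
    case False
    then obtain x1 where "x1 \<in> X" "x1 \<noteq> p"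
      using assms(4) by blast
    then show ?thesis
      using weak_tangent_qs_embedding_of_shrinking_maps[OF assms(1,3,4,4) _ _ h ball
          LIMSEQ_inverse_real_of_nat ps(1) distortion]
      by blast
  qed
  moreover have "(\<lambda>s. 1 / inv_into {0..} \<eta> (1 / s)) = inverse_distortion \<eta>"
    by (simp add: fun_eq_iff inverse_distortion_def)
  ultimately show ?thesis
    by simp
qed

end
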